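(* Let $\boldsymbol\theta^*\in\mathbb{R}^d\setminus\{\mathbf 0\}$ and $G(\boldsymbol\theta)=\mathbb{E}\log\big(\tfrac12\phi_d(\mathbf Y-\boldsymbol\theta)+\tfrac12\phi_d(\mathbf Y+\boldsymbol\theta)\big)$ where $\mathbf Y\sim\tfrac12N(-\boldsymbol\theta^*,I_d)+\tfrac12N(\boldsymbol\theta^*,I_d)$. Then $G$ has exactly three stationary points, $\mathbf 0$, $\boldsymbol\theta^*$ and $-\boldsymbol\theta^*$. If $d=1$, $0$ is a local minimum of $G$ and $\theta^*,-\theta^*$ are global maxima. If $d>1$, $\mathbf 0$ is a saddle point and $\boldsymbol\theta^*,-\boldsymbol\theta^*$ are global maxima.
   Context: $\phi_d$ is the density of $N(\mathbf 0,I_d)$. *)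

theory Defs
  imports "HOL-Analysis.Analysis"
begin

definition std_normal_density :: "'a::euclidean_space \<Rightarrow> real" where
  "std_normal_density y = (2 * pi) powr (- real DIM('a) / 2) * exp (- (norm y ^ 2) / 2)"

definition mix_density :: "'a::euclidean_space \<Rightarrow> 'a \<Rightarrow> real" where
  "mix_density t y = 1/2 * std_normal_density (y - t) + 1/2 * std_normal_density (y + t)"

definition popG :: "'a::euclidean_space \<Rightarrow> 'a \<Rightarrow> real" where
  "popG tstar t = (\<integral>y. mix_density tstar y * ln (mix_density t y) \<partial>lborel)"

definition stationary_point :: "('a::real_normed_vector \<Rightarrow> real) \<Rightarrow> 'a \<Rightarrow> bool" where
  "stationary_point f x \<longleftrightarrow> (f has_derivative (\<lambda>h. 0)) (at x)"

definition local_min_at :: "('a::topological_space \<Rightarrow> real) \<Rightarrow> 'a \<Rightarrow> bool" where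
  "local_min_at f x \<longleftrightarrow> (\<forall>\<^sub>F y in at x. f x \<le> f y)"

definition local_max_at :: "('a::topological_space \<Rightarrow> real) \<Rightarrow> 'a \<Rightarrow> bool" where
  "local_max_at f x \<longleftrightarrow> (\<forall>\<^sub>F y in at x. f y \<le> f x)"

definition global_max_at :: "('a \<Rightarrow> real) \<Rightarrow> 'a \<Rightarrow> bool" where
  "global_max_at f x \<longleftrightarrow> (\<forall>y. f y \<le> f x)"

definition saddle_point :: "('a::real_normed_vector \<Rightarrow> real) \<Rightarrow> 'a \<Rightarrow> bool" where
  "saddle_point f x \<longleftrightarrow> stationary_point f x \<and> \<not> local_min_at f x \<and> \<not> local_max_at f x"

end

theory Submission
  imports Defs "HOL-Probability.Distributions"
begin

text \<open>
  Completing the square gives \<open>ln (mix_density t y) = ln (\<phi> y) - \<bar>t\<bar>\<^sup>2/2 + ln (cosh (t \<bullet> y))\<close>, so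
  \<open>G = popG \<theta>\<^sup>*\<close> is differentiable with \<open>DG(t) h = E[tanh (t \<bullet> Y) (h \<bullet> Y)] - t \<bullet> h\<close>, and
  Gibbs' inequality makes \<open>\<plusminus>\<theta>\<^sup>*\<close> global maxima, hence stationary.

  At any other point \<open>t\<close> the derivative is nonzero. For a direction \<open>u \<perp> \<theta>\<^sup>*\<close>, Stein's
  identity for the Gaussian shows \<open>DG(t) u = -(t \<bullet> u)\<close> times a positive average, so \<open>t\<close> lies on
  the line through \<open>\<theta>\<^sup>*\<close>. For \<open>t = \<kappa> \<theta>\<^sup>*\<close> with \<open>\<kappa> > 0\<close> one has
  \<open>DG(t) t = \<integral> (p\<^sub>\<theta>\<^sub>* - p\<^sub>t)(y) (t \<bullet> y) tanh (t \<bullet> y) dy\<close>; the two mixture densities cross exactly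
  once as functions of \<open>\<bar>\<theta>\<^sup>* \<bullet> y\<bar>\<close>, while \<open>(t \<bullet> y) tanh (t \<bullet> y)\<close> is increasing in it, so this
  is positive for \<open>\<kappa> < 1\<close> and negative for \<open>\<kappa> > 1\<close>.

  Consequently \<open>G\<close> increases strictly from \<open>0\<close> towards \<open>\<plusminus>\<theta>\<^sup>*\<close> and decreases strictly from \<open>0\<close>
  in directions orthogonal to \<open>\<theta>\<^sup>*\<close>: \<open>0\<close> is a local minimum in dimension one and a saddle point
  otherwise.
\<close>

text \<open>The qualification avoids the one-dimensional \<open>std_normal_density\<close> of HOL-Probability.\<close>
abbreviation \<phi> :: "'a::euclidean_space \<Rightarrow> real" where
  "\<phi> \<equiv> Defs.std_normal_density"

section \<open>The standard Gaussian density on a Euclidean space\<close>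

lemma std_normal_density_eq:
  "\<phi> (y::'a::euclidean_space) = (2 * pi) powr (- real DIM('a) / 2) * exp (- (norm y ^ 2) / 2)"
  by (simp add: Defs.std_normal_density_def)

lemma std_normal_density_pos: "\<phi> y > 0"
  by (simp add: std_normal_density_eq)

lemma borel_measurable_std_normal_density [measurable]: "\<phi> \<in> borel_measurable borel"
  unfolding Defs.std_normal_density_def[abs_def] by measurable

lemma continuous_on_std_normal_density: "continuous_on UNIV \<phi>"
  unfolding Defs.std_normal_density_def[abs_def] by (intro continuous_intros) auto

lemma std_normal_density_diff:
  "\<phi> (y - t) = \<phi> (y::'a::euclidean_space) * exp (- (norm t ^ 2) / 2) * exp (t \<bullet> y)"
proof -
  have "norm (y - t) ^ 2 = norm y ^ 2 - 2 * (t \<bullet> y) + norm t ^ 2"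
    by (simp add: power2_norm_eq_inner inner_diff_left inner_diff_right inner_commute)
  then have "- (norm (y - t) ^ 2) / 2 = - (norm y ^ 2) / 2 + (- (norm t ^ 2) / 2) + t \<bullet> y"
    by (simp add: field_simps)
  then have "exp (- (norm (y - t) ^ 2) / 2)
      = exp (- (norm y ^ 2) / 2) * exp (- (norm t ^ 2) / 2) * exp (t \<bullet> y)"
    by (simp only: exp_add)
  then show ?thesis
    unfolding std_normal_density_eq by (simp add: mult_ac)
qed

lemma std_normal_density_add:
  "\<phi> (y + t) = \<phi> (y::'a::euclidean_space) * exp (- (norm t ^ 2) / 2) * exp (- (t \<bullet> y))"
  using std_normal_density_diff[of y "- t"] by simp

lemma norm_power2_sum_Basis:
  "norm (\<Sum>b\<in>Basis. f b *\<^sub>R b :: 'a::euclidean_space) ^ 2 = (\<Sum>b\<in>Basis. (f b)^2)"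
  unfolding power2_norm_eq_inner
  by (subst euclidean_inner) (simp add: inner_sum_left_Basis power2_eq_square)

lemma std_normal_density_eq_prod:
  "\<phi> (\<Sum>b\<in>Basis. f b *\<^sub>R b :: 'a::euclidean_space) = (\<Prod>b\<in>Basis. normal_density 0 1 (f b))"
proof -
  have "(\<Prod>b\<in>(Basis::'a set). 1 / sqrt (2 * pi)) = ((2 * pi) powr (-1/2)) ^ DIM('a)"
    by (simp add: prod_constant powr_minus_divide powr_half_sqrt)
  also have "\<dots> = (2 * pi) powr (- real DIM('a) / 2)"
    by (simp add: powr_realpow[symmetric] powr_powr)
  finally have const: "(2 * pi) powr (- real DIM('a) / 2) = (\<Prod>b\<in>(Basis::'a set). 1 / sqrt (2 * pi))"
    by simp
  have "- (norm (\<Sum>b\<in>Basis. f b *\<^sub>R b :: 'a) ^ 2) / 2 = (\<Sum>b\<in>(Basis::'a set). - ((f b)^2 / 2))"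
    by (simp add: norm_power2_sum_Basis sum_negf sum_divide_distrib)
  then have gauss: "exp (- (norm (\<Sum>b\<in>Basis. f b *\<^sub>R b :: 'a) ^ 2) / 2)
      = (\<Prod>b\<in>(Basis::'a set). exp (- ((f b)^2 / 2)))"
    by (simp add: exp_sum)
  show ?thesis
    unfolding std_normal_density_eq const gauss Distributions.std_normal_density_def
    by (simp only: prod.distrib[symmetric] minus_divide_left)
qed

lemma integrable_std_normal_density: "integrable lborel (\<phi> :: 'a::euclidean_space \<Rightarrow> real)"
proof -
  interpret product_sigma_finite "\<lambda>_::'a. lborel" by standard
  have "integrable (\<Pi>\<^sub>M b\<in>(Basis::'a set). lborel) (\<lambda>f. \<Prod>b\<in>Basis. normal_density 0 1 (f b))"
    by (intro product_integrable_prod) (auto intro: integrable_std_normal_moment[of 0, simplified])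
  then show ?thesis
    by (subst lborel_eq) (simp add: integrable_distr_eq std_normal_density_eq_prod)
qed

lemma integral_std_normal_density: "(\<integral>y. \<phi> y \<partial>lborel) = (1::real)"
proof -
  interpret product_sigma_finite "\<lambda>_::'a. lborel" by standard
  have "(\<integral>y. (\<phi>::'a \<Rightarrow> real) y \<partial>lborel)
      = (\<integral>f. (\<Prod>b\<in>(Basis::'a set). normal_density 0 1 (f b)) \<partial>(\<Pi>\<^sub>M b\<in>Basis. lborel))"
    by (subst lborel_eq) (simp add: integral_distr std_normal_density_eq_prod)
  also have "\<dots> = (\<Prod>b\<in>(Basis::'a set). (\<integral>x. normal_density 0 1 x \<partial>lborel))"
    by (intro product_integral_prod) (auto intro: integrable_std_normal_moment[of 0, simplified])
  also have "\<dots> = 1"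
    using integral_std_normal_moment_even[of 0] by simp
  finally show ?thesis .
qed

lemma nn_integral_lborel_affine:
  fixes f :: "'a::euclidean_space \<Rightarrow> ennreal"
  assumes [measurable]: "f \<in> borel_measurable borel" and c: "c \<noteq> 0"
  shows "(\<integral>\<^sup>+x. f x \<partial>lborel) = ennreal (\<bar>c\<bar>^DIM('a)) * (\<integral>\<^sup>+x. f (m + c *\<^sub>R x) \<partial>lborel)"
  by (subst lborel_affine[OF c, of m]) (simp add: nn_integral_density nn_integral_distr nn_integral_cmult)

lemma lborel_integrable_affine:
  fixes f :: "'a::euclidean_space \<Rightarrow> real"
  assumes f: "integrable lborel f" and c: "c \<noteq> 0"
  shows "integrable lborel (\<lambda>x. f (m + c *\<^sub>R x))"
  using f f[THEN borel_measurable_integrable] c unfolding integrable_iff_bounded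
  by (subst (asm) nn_integral_lborel_affine[where c=c and m=m]) (auto simp: ennreal_mult_less_top)

lemma lborel_integrable_affine_iff:
  fixes f :: "'a::euclidean_space \<Rightarrow> real"
  assumes c: "c \<noteq> 0"
  shows "integrable lborel (\<lambda>x. f (m + c *\<^sub>R x)) \<longleftrightarrow> integrable lborel f"
proof
  assume "integrable lborel (\<lambda>x. f (m + c *\<^sub>R x))"
  from lborel_integrable_affine[OF this, of "1/c" "- (1/c) *\<^sub>R m"] c
  show "integrable lborel f" by (simp add: algebra_simps)
qed (use lborel_integrable_affine c in auto)

lemma lborel_integral_affine:
  fixes f :: "'a::euclidean_space \<Rightarrow> real"
  assumes c: "c \<noteq> 0"
  shows "(\<integral>x. f x \<partial>lborel) = \<bar>c\<bar>^DIM('a) * (\<integral>x. f (m + c *\<^sub>R x) \<partial>lborel)"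
proof cases
  assume f[measurable]: "integrable lborel f"
  then show ?thesis
    using c f[THEN borel_measurable_integrable] lborel_integrable_affine[OF f c, of m]
    by (subst lborel_affine[OF c, of m]) (simp add: integral_density integral_distr)
next
  assume "\<not> integrable lborel f"
  with c show ?thesis
    by (simp add: lborel_integrable_affine_iff not_integrable_integral_eq)
qed

lemma lborel_integral_translate:
  fixes f :: "'a::euclidean_space \<Rightarrow> real"
  shows "(\<integral>x. f (x + m) \<partial>lborel) = (\<integral>x. f x \<partial>lborel)"
  using lborel_integral_affine[of 1 f m] by (simp add: add.commute)

lemma lborel_integrable_translate_iff:
  fixes f :: "'a::euclidean_space \<Rightarrow> real"
  shows "integrable lborel (\<lambda>x. f (x + m)) \<longleftrightarrow> integrable lborel f"
  using lborel_integrable_affine_iff[where c=1 and m=m and f=f] by (simp add: add.commute)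

lemma integrable_bound_abs:
  fixes f g :: "'a \<Rightarrow> real"
  assumes "integrable M f" "g \<in> borel_measurable M" "\<And>x. \<bar>g x\<bar> \<le> f x"
  shows "integrable M g"
  using assms by (intro Bochner_Integration.integrable_bound[OF assms(1,2)] AE_I2)
    (auto intro: order_trans[OF _ abs_ge_self])

lemma power2_add_le: "((a::real) + b)^2 \<le> 2 * a^2 + 2 * b^2"
  using zero_le_power2[of "a - b"] by (simp add: power2_sum power2_diff)

lemma norm_le_one_plus_power2: "norm (y::'a::real_normed_vector) \<le> 1 + norm y ^ 2"
proof (cases "norm y \<le> 1")
  case False
  then have "norm y * 1 \<le> norm y * norm y"
    by (intro mult_left_mono) auto
  then show ?thesis
    by (simp add: power2_eq_square)
qed (use zero_le_power2[of "norm y"] in linarith)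

lemma std_normal_density_mult_norm_power2_le:
  "\<phi> (z::'a::euclidean_space) * norm z ^ 2 \<le> 4 * \<phi> ((1 / sqrt 2) *\<^sub>R z)"
proof -
  define N where "N = (2 * pi) powr (- real DIM('a) / 2)"
  define x where "x = norm z ^ 2"
  have "x \<le> 4 * exp (x/4)"
    using exp_ge_add_one_self[of "x / 4"] by linarith
  then have "x * exp (- x / 2) \<le> 4 * exp (x/4) * exp (- x/2)"
    by (intro mult_right_mono) auto
  also have "\<dots> = 4 * exp (- x / 4)"
    by (simp add: exp_add[symmetric])
  finally have "N * (x * exp (- x / 2)) \<le> N * (4 * exp (- x / 4))"
    unfolding N_def by (intro mult_left_mono) auto
  moreover have half: "norm ((1 / sqrt 2) *\<^sub>R z) ^ 2 = x / 2"
    by (simp add: x_def power_mult_distrib power_divide)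
  ultimately show ?thesis
    unfolding std_normal_density_eq N_def[symmetric] half by (simp add: x_def mult_ac)
qed

lemma integrable_std_normal_density_norm_power2:
  "integrable lborel (\<lambda>z::'a::euclidean_space. \<phi> z * norm z ^ 2)"
proof (rule integrable_bound_abs)
  show "integrable lborel (\<lambda>z::'a. 4 * \<phi> ((1 / sqrt 2) *\<^sub>R z))"
    using lborel_integrable_affine[OF integrable_std_normal_density, of "1 / sqrt 2" 0] by simp
  show "\<bar>\<phi> z * norm z ^ 2\<bar> \<le> 4 * \<phi> ((1 / sqrt 2) *\<^sub>R z)" for z :: 'a
    using std_normal_density_mult_norm_power2_le[of z] std_normal_density_pos[of z] by simp
qed measurable

lemma integrable_std_normal_density_translate:
  "integrable lborel (\<lambda>y::'a::euclidean_space. \<phi> (y - m))"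
  using lborel_integrable_translate_iff[of \<phi> "- m"] integrable_std_normal_density by simp

lemma integrable_std_normal_density_translate_quadratic:
  "integrable lborel (\<lambda>y::'a::euclidean_space. \<phi> (y - m) * (1 + norm y ^ 2))"
proof (rule integrable_bound_abs)
  show "integrable lborel (\<lambda>y::'a. 2 * (\<phi> (y - m) * norm (y - m) ^ 2) + (1 + 2 * norm m ^ 2) * \<phi> (y - m))"
    using lborel_integrable_translate_iff[of "\<lambda>z. \<phi> z * norm z ^ 2" "- m"]
    by (intro Bochner_Integration.integrable_add Bochner_Integration.integrable_mult_right
        integrable_std_normal_density_translate) (simp add: integrable_std_normal_density_norm_power2)
  fix y :: 'a
  have "norm y ^ 2 \<le> (norm (y - m) + norm m) ^ 2"
    using norm_triangle_sub[of y m] by (simp add: power_mono)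
  also have "\<dots> \<le> 2 * norm (y - m) ^ 2 + 2 * norm m ^ 2"
    by (rule power2_add_le)
  finally have "\<phi> (y - m) * (1 + norm y ^ 2) \<le> \<phi> (y - m) * (2 * norm (y - m) ^ 2 + (1 + 2 * norm m ^ 2))"
    using std_normal_density_pos[of "y - m"] by (intro mult_left_mono) auto
  then show "\<bar>\<phi> (y - m) * (1 + norm y ^ 2)\<bar>
      \<le> 2 * (\<phi> (y - m) * norm (y - m) ^ 2) + (1 + 2 * norm m ^ 2) * \<phi> (y - m)"
    using std_normal_density_pos[of "y - m"] by (simp add: algebra_simps)
qed measurable

lemma integrable_std_normal_density_mult_quadratic:
  fixes f :: "'a::euclidean_space \<Rightarrow> real"
  assumes [measurable]: "f \<in> borel_measurable borel" and f: "\<And>z. \<bar>f z\<bar> \<le> C * (1 + norm z ^ 2)"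
  shows "integrable lborel (\<lambda>z. \<phi> (z - m) * f z)"
proof (rule integrable_bound_abs)
  show "integrable lborel (\<lambda>z. C * (\<phi> (z - m) * (1 + norm z ^ 2)))"
    by (intro Bochner_Integration.integrable_mult_right integrable_std_normal_density_translate_quadratic)
  show "\<bar>\<phi> (z - m) * f z\<bar> \<le> C * (\<phi> (z - m) * (1 + norm z ^ 2))" for z
    using std_normal_density_pos[of "z - m"] mult_left_mono[OF f[of z], of "\<phi> (z - m)"]
    by (simp add: abs_mult mult_ac)
qed measurable

lemma borel_measurable_tanh [measurable]: "(tanh :: real \<Rightarrow> real) \<in> borel_measurable borel"
  by (intro borel_measurable_continuous_onI continuous_intros) (metis cosh_real_pos order.irrefl)

lemma borel_measurable_cosh [measurable]: "(cosh :: real \<Rightarrow> real) \<in> borel_measurable borel"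
  by (intro borel_measurable_continuous_onI continuous_intros)

lemma abs_tanh_le_1: "\<bar>tanh (x::real)\<bar> \<le> 1"
  using tanh_real_bounds[of x] by auto

lemma tanh_power2_le_1: "tanh (x::real) ^ 2 \<le> 1"
  using abs_tanh_le_1[of x] by (simp add: abs_square_le_1)

lemma has_real_derivative_tanh: "(tanh has_real_derivative (1 - tanh x ^ 2)) (at (x::real))"
  using has_field_derivative_tanh[OF _ DERIV_ident, of x] by (simp add: less_imp_neq[OF cosh_real_pos, symmetric])

lemma tanh_lipschitz: "\<bar>tanh a - tanh c\<bar> \<le> \<bar>a - c :: real\<bar>"
proof -
  have "\<bar>tanh a - tanh c\<bar> \<le> a - c" if "c < a" for a c :: real
  proof -
    obtain z where "tanh a - tanh c = (a - c) * (1 - tanh z ^ 2)"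
      using MVT2[OF \<open>c < a\<close>, of tanh "\<lambda>x. 1 - tanh x ^ 2"] has_real_derivative_tanh by blast
    then show ?thesis
      using \<open>c < a\<close> tanh_power2_le_1[of z] by (simp add: abs_mult mult_left_le)
  qed
  from this[of a c] this[of c a] show ?thesis
    by (cases a c rule: linorder_cases) (auto simp: abs_minus_commute)
qed

lemma abs_le_quadratic_if_deriv_le_linear:
  fixes f f' :: "real \<Rightarrow> real"
  assumes der: "\<And>x. (f has_real_derivative f' x) (at x)" and f0: "f 0 = 0"
    and f': "\<And>x. \<bar>x\<bar> \<le> \<bar>d\<bar> \<Longrightarrow> \<bar>f' x\<bar> \<le> K * \<bar>x\<bar>" and K: "K \<ge> 0"
  shows "\<bar>f d\<bar> \<le> K * d^2"
proof -
  obtain z where z: "\<bar>z\<bar> \<le> \<bar>d\<bar>" "f d = d * f' z"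
  proof (cases d "0::real" rule: linorder_cases)
    case less
    from MVT2[OF less, of f f'] der obtain z where "d < z" "z < 0" "f 0 - f d = (0 - d) * f' z"
      by blast
    with f0 that[of z] show ?thesis by simp
  next
    case greater
    from MVT2[OF greater, of f f'] der obtain z where "0 < z" "z < d" "f d - f 0 = (d - 0) * f' z"
      by blast
    with f0 that[of z] show ?thesis by simp
  qed (use f0 that[of 0] in simp)
  have "\<bar>f' z\<bar> \<le> K * \<bar>d\<bar>"
    using f'[OF z(1)] mult_left_mono[OF z(1) K] by linarith
  then have "\<bar>f d\<bar> \<le> \<bar>d\<bar> * (K * \<bar>d\<bar>)"
    unfolding z(2) abs_mult by (intro mult_left_mono) auto
  then show ?thesis
    by (simp add: power2_eq_square mult_ac)
qed

lemma ln_cosh_taylor: "\<bar>ln (cosh (a + d)) - ln (cosh a) - tanh a * d\<bar> \<le> (d::real)^2"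
proof -
  have "\<bar>ln (cosh (a + d)) - ln (cosh a) - tanh a * d\<bar> \<le> 1 * d^2"
  proof (rule abs_le_quadratic_if_deriv_le_linear[where f'="\<lambda>x. tanh (a + x) - tanh a"])
    show "((\<lambda>x. ln (cosh (a + x)) - ln (cosh a) - tanh a * x) has_real_derivative tanh (a + x) - tanh a) (at x)"
      for x
      using cosh_real_pos[of "a + x"]
      by (auto intro!: derivative_eq_intros simp: tanh_def divide_simps)
    show "\<bar>tanh (a + x) - tanh a\<bar> \<le> 1 * \<bar>x\<bar>" for x
      using tanh_lipschitz[of "a + x" a] by simp
  qed simp_all
  then show ?thesis by simp
qed

lemma tanh_taylor: "\<bar>tanh (a + d) - tanh a - (1 - tanh a ^ 2) * d\<bar> \<le> 2 * (d::real)^2"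
proof (rule abs_le_quadratic_if_deriv_le_linear[where f'="\<lambda>x. tanh a ^ 2 - tanh (a + x) ^ 2"])
  show "((\<lambda>x. tanh (a + x) - tanh a - (1 - tanh a ^ 2) * x) has_real_derivative tanh a ^ 2 - tanh (a + x) ^ 2) (at x)"
    for x
    using DERIV_chain2[OF has_real_derivative_tanh, of "\<lambda>x. a + x" 1 x]
    by (auto intro!: derivative_eq_intros)
  show "\<bar>tanh a ^ 2 - tanh (a + x) ^ 2\<bar> \<le> 2 * \<bar>x\<bar>" for x
  proof -
    have "\<bar>tanh a ^ 2 - tanh (a + x) ^ 2\<bar> = \<bar>tanh a - tanh (a + x)\<bar> * \<bar>tanh a + tanh (a + x)\<bar>"
      by (simp add: power2_eq_square abs_mult[symmetric] algebra_simps)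
    also have "\<dots> \<le> \<bar>x\<bar> * 2"
      using tanh_lipschitz[of a "a + x"] abs_tanh_le_1[of a] abs_tanh_le_1[of "a + x"]
      by (intro mult_mono) auto
    finally show ?thesis by simp
  qed
qed simp_all

lemma ln_cosh_bounds: "0 \<le> ln (cosh x) \<and> ln (cosh x) \<le> \<bar>x::real\<bar>"
proof
  show "0 \<le> ln (cosh x)"
    using cosh_real_ge_1[of x] by simp
  have "cosh x \<le> exp \<bar>x\<bar>"
    by (cases "x \<ge> 0") (auto simp: cosh_field_def)
  then show "ln (cosh x) \<le> \<bar>x\<bar>"
    using cosh_real_pos[of x] by (metis ln_exp ln_le_cancel_iff exp_gt_zero)
qed

lemma abs_exp_minus_one_le: "\<bar>exp x - 1\<bar> \<le> \<bar>x\<bar> * exp \<bar>x::real\<bar>"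
proof (cases "x \<ge> 0")
  case True
  have "(1 - x) * exp x \<le> exp (- x) * exp x"
    using exp_ge_add_one_self[of "- x"] by (intro mult_right_mono) auto
  then show ?thesis
    using True by (simp add: exp_minus algebra_simps)
next
  case False
  have "- x * 1 \<le> - x * exp (- x)"
    using False by (intro mult_left_mono) auto
  then have "1 - exp x \<le> - x * exp (- x)"
    using exp_ge_add_one_self[of x] by linarith
  then show ?thesis
    using False by (simp add: abs_if)
qed

lemma exp_taylor: "\<bar>exp d - 1 - d\<bar> \<le> exp \<bar>d\<bar> * (d::real)^2"
proof (rule abs_le_quadratic_if_deriv_le_linear[where f'="\<lambda>x. exp x - 1"])
  show "((\<lambda>x. exp x - 1 - x) has_real_derivative exp x - 1) (at x)" for x
    by (auto intro!: derivative_eq_intros)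
  fix x :: real
  assume "\<bar>x\<bar> \<le> \<bar>d\<bar>"
  then have "\<bar>x\<bar> * exp \<bar>x\<bar> \<le> \<bar>x\<bar> * exp \<bar>d\<bar>"
    by (intro mult_left_mono) auto
  then show "\<bar>exp x - 1\<bar> \<le> exp \<bar>d\<bar> * \<bar>x\<bar>"
    using abs_exp_minus_one_le[of x] by (simp add: mult.commute)
qed auto

lemma mix_density_eq_cosh:
  "mix_density t y = \<phi> (y::'a::euclidean_space) * exp (- (norm t ^ 2) / 2) * cosh (t \<bullet> y)"
  unfolding mix_density_def std_normal_density_diff std_normal_density_add cosh_field_def
  by (simp add: field_simps)

lemma mix_density_pos: "mix_density t y > 0"
  unfolding mix_density_eq_cosh using std_normal_density_pos[of y] by simp

lemma borel_measurable_mix_density [measurable]: "mix_density t \<in> borel_measurable borel"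
  unfolding mix_density_def[abs_def] by measurable

lemma continuous_on_mix_density: "continuous_on UNIV (mix_density t)"
  unfolding mix_density_def[abs_def]
  by (intro continuous_intros continuous_on_compose2[OF continuous_on_std_normal_density]) auto

lemma mix_density_uminus: "mix_density (- t) = mix_density t"
  by (rule ext) (simp add: mix_density_eq_cosh)

lemma popG_uminus: "popG s (- t) = popG s t"
  unfolding popG_def mix_density_uminus ..

lemma integrable_mix_density_mult:
  fixes g :: "'a::euclidean_space \<Rightarrow> real"
  assumes [measurable]: "g \<in> borel_measurable borel" and g: "\<And>y. \<bar>g y\<bar> \<le> C * (1 + norm y ^ 2)"
  shows "integrable lborel (\<lambda>y. mix_density s y * g y)"
proof -
  have "integrable lborel (\<lambda>y. 1/2 * (\<phi> (y - s) * g y) + 1/2 * (\<phi> (y - - s) * g y))"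
    by (intro Bochner_Integration.integrable_add Bochner_Integration.integrable_mult_right
        integrable_std_normal_density_mult_quadratic[OF _ g]) simp_all
  then show ?thesis
    by (simp add: mix_density_def algebra_simps)
qed

lemma integrable_mix_density: "integrable lborel (mix_density (s::'a::euclidean_space))"
  using integrable_mix_density_mult[of "\<lambda>_. 1" 1 s] by simp

lemma integral_mix_density: "(\<integral>y. mix_density (s::'a::euclidean_space) y \<partial>lborel) = 1"
proof -
  have "(\<integral>y. mix_density s y \<partial>lborel) = 1/2 * (\<integral>y. \<phi> (y - s) \<partial>lborel) + 1/2 * (\<integral>y. \<phi> (y - - s) \<partial>lborel)"
    unfolding mix_density_def
    using integrable_std_normal_density_translate[of s] integrable_std_normal_density_translate[of "- s"]
    by simp
  also have "\<dots> = 1"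
    using lborel_integral_translate[of \<phi> "- s"] lborel_integral_translate[of \<phi> s]
      integral_std_normal_density by simp
  finally show ?thesis .
qed

lemma integrable_mix_density_norm_power2:
  "integrable lborel (\<lambda>y. mix_density s y * norm (y::'a::euclidean_space) ^ 2)"
  by (rule integrable_mix_density_mult[where C=1]) auto

lemma integrable_mix_density_norm:
  "integrable lborel (\<lambda>y. mix_density s y * norm (y::'a::euclidean_space))"
  by (rule integrable_mix_density_mult[where C=1]) (auto simp: norm_le_one_plus_power2)

lemma abs_inner_le_quadratic: "\<bar>h \<bullet> y\<bar> \<le> norm h * (1 + norm (y::'a::real_inner) ^ 2)"
  using Cauchy_Schwarz_ineq2[of h y] norm_le_one_plus_power2[of y]
  by (meson mult_left_mono norm_ge_zero order_trans)

lemma integrable_mix_density_tanh_inner: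
  "integrable lborel (\<lambda>y. mix_density s y * (tanh (t \<bullet> y) * (h \<bullet> (y::'a::euclidean_space))))"
proof (rule integrable_mix_density_mult)
  show "\<bar>tanh (t \<bullet> y) * (h \<bullet> y)\<bar> \<le> norm h * (1 + norm y ^ 2)" for y
    using abs_inner_le_quadratic[of h y] abs_tanh_le_1[of "t \<bullet> y"]
    by (metis abs_ge_zero abs_mult mult_left_le_one_le order_trans)
qed measurable

lemma integrable_mix_density_ln_cosh:
  "integrable lborel (\<lambda>y. mix_density s y * ln (cosh (t \<bullet> (y::'a::euclidean_space))))"
proof (rule integrable_mix_density_mult)
  show "\<bar>ln (cosh (t \<bullet> y))\<bar> \<le> norm t * (1 + norm y ^ 2)" for y
    using ln_cosh_bounds[of "t \<bullet> y"] abs_inner_le_quadratic[of t y] by linarith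
qed measurable

lemma ln_mix_density:
  "ln (mix_density t y) = ln (\<phi> y) - norm t ^ 2 / 2 + ln (cosh (t \<bullet> (y::'a::euclidean_space)))"
  unfolding mix_density_eq_cosh using std_normal_density_pos[of y] by (simp add: ln_mult)

lemma integrable_mix_density_ln_std_normal_density:
  "integrable lborel (\<lambda>y. mix_density s y * ln (\<phi> (y::'a::euclidean_space)))"
proof (rule integrable_mix_density_mult)
  define c where "c = ln ((2 * pi) powr (- real DIM('a) / 2))"
  show "\<bar>ln (\<phi> y)\<bar> \<le> (\<bar>c\<bar> + 1) * (1 + norm y ^ 2)" for y :: 'a
  proof -
    have "ln (\<phi> y) = c - norm y ^ 2 / 2"
      unfolding std_normal_density_eq c_def by (simp add: ln_mult)
    moreover have "0 \<le> \<bar>c\<bar> * norm y ^ 2"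
      by simp
    ultimately show ?thesis
      unfolding distrib_left distrib_right
      using abs_ge_self[of c] abs_ge_minus_self[of c] zero_le_power2[of "norm y"] by linarith
  qed
qed measurable

lemma integrable_mix_density_ln_mix_density:
  "integrable lborel (\<lambda>y. mix_density s y * ln (mix_density t (y::'a::euclidean_space)))"
  unfolding ln_mix_density distrib_left right_diff_distrib
  by (intro Bochner_Integration.integrable_add Bochner_Integration.integrable_diff
      integrable_mix_density_ln_std_normal_density integrable_mix_density_ln_cosh
      Bochner_Integration.integrable_mult_left integrable_mix_density)

section \<open>The population log-likelihood and its derivative\<close>

lemma popG_eq_ln_cosh:
  fixes s t :: "'a::euclidean_space"
  shows "popG s t = popG s 0 - norm t ^ 2 / 2 + (\<integral>y. mix_density s y * ln (cosh (t \<bullet> y)) \<partial>lborel)"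
proof -
  have "popG s t = (\<integral>y. mix_density s y * ln (\<phi> y) - norm t ^ 2 / 2 * mix_density s y
      + mix_density s y * ln (cosh (t \<bullet> y)) \<partial>lborel)"
    unfolding popG_def ln_mix_density by (simp add: algebra_simps)
  also have "\<dots> = (\<integral>y. mix_density s y * ln (\<phi> y) \<partial>lborel) - norm t ^ 2 / 2
      + (\<integral>y. mix_density s y * ln (cosh (t \<bullet> y)) \<partial>lborel)"
    using integrable_mix_density_ln_std_normal_density[of s] integrable_mix_density_ln_cosh[of s t]
      integrable_mix_density[of s] integral_mix_density[of s]
    by simp
  moreover have "popG s 0 = (\<integral>y. mix_density s y * ln (\<phi> y) \<partial>lborel)"
    unfolding popG_def ln_mix_density by simp
  ultimately show ?thesis by simp
qed

definition popG_deriv :: "'a::euclidean_space \<Rightarrow> 'a \<Rightarrow> 'a \<Rightarrow> real" where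
  "popG_deriv s t h = (\<integral>y. mix_density s y * (tanh (t \<bullet> y) * (h \<bullet> y)) \<partial>lborel) - t \<bullet> h"

lemma popG_taylor:
  fixes s t h :: "'a::euclidean_space"
  shows "\<bar>popG s (t + h) - popG s t - popG_deriv s t h\<bar>
    \<le> (1/2 + (\<integral>y. mix_density s y * norm y ^ 2 \<partial>lborel)) * norm h ^ 2"
proof -
  define R where "R y = ln (cosh ((t + h) \<bullet> y)) - ln (cosh (t \<bullet> y)) - tanh (t \<bullet> y) * (h \<bullet> y)" for y
  have R: "\<bar>R y\<bar> \<le> norm h ^ 2 * norm y ^ 2" for y
  proof -
    have "\<bar>R y\<bar> \<le> (h \<bullet> y) ^ 2"
      unfolding R_def inner_add_left using ln_cosh_taylor[of "t \<bullet> y" "h \<bullet> y"] by simp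
    also have "\<dots> \<le> (norm h * norm y) ^ 2"
      using Cauchy_Schwarz_ineq2[of h y] by (metis abs_ge_zero power2_abs power_mono)
    finally show ?thesis
      by (simp add: power_mult_distrib)
  qed
  have int_R: "integrable lborel (\<lambda>y. mix_density s y * R y)"
    unfolding R_def right_diff_distrib
    by (intro Bochner_Integration.integrable_diff integrable_mix_density_ln_cosh
        integrable_mix_density_tanh_inner)
  have eq: "popG s (t + h) - popG s t - popG_deriv s t h
      = - (norm h ^ 2) / 2 + (\<integral>y. mix_density s y * R y \<partial>lborel)"
    unfolding popG_eq_ln_cosh[of s "t + h"] popG_eq_ln_cosh[of s t] popG_deriv_def R_def
      right_diff_distrib
    using integrable_mix_density_ln_cosh[of s "t + h"] integrable_mix_density_ln_cosh[of s t]
      integrable_mix_density_tanh_inner[of s t h]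
    by (simp add: power2_norm_eq_inner inner_add_left inner_add_right inner_commute field_simps)
  have "\<bar>\<integral>y. mix_density s y * R y \<partial>lborel\<bar>
      \<le> (\<integral>y. norm h ^ 2 * (mix_density s y * norm y ^ 2) \<partial>lborel)"
  proof (rule integral_abs_bound_integral[OF int_R])
    show "integrable lborel (\<lambda>y. norm h ^ 2 * (mix_density s y * norm y ^ 2))"
      by (intro Bochner_Integration.integrable_mult_right integrable_mix_density_norm_power2)
    show "\<bar>mix_density s y * R y\<bar> \<le> norm h ^ 2 * (mix_density s y * norm y ^ 2)" for y
      using mult_left_mono[OF R[of y], of "mix_density s y"] mix_density_pos[of s y]
      by (simp add: abs_mult mult_ac)
  qed
  then have "\<bar>- (norm h ^ 2) / 2 + (\<integral>y. mix_density s y * R y \<partial>lborel)\<bar>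
      \<le> norm h ^ 2 / 2 + norm h ^ 2 * (\<integral>y. mix_density s y * norm y ^ 2 \<partial>lborel)"
    using abs_triangle_ineq[of "- (norm h ^ 2) / 2" "\<integral>y. mix_density s y * R y \<partial>lborel"]
    by simp
  then show ?thesis
    unfolding eq by (simp add: algebra_simps)
qed

lemma bounded_linear_popG_deriv: "bounded_linear (popG_deriv s t)"
proof (rule bounded_linear_intro[where K="(\<integral>y. mix_density s y * norm y \<partial>lborel) + norm t"])
  show "popG_deriv s t (x + y) = popG_deriv s t x + popG_deriv s t y" for x y
    unfolding popG_deriv_def
    using integrable_mix_density_tanh_inner[of s t x] integrable_mix_density_tanh_inner[of s t y]
    by (simp add: inner_add_left inner_add_right distrib_left algebra_simps)
  show "popG_deriv s t (r *\<^sub>R x) = r *\<^sub>R popG_deriv s t x" for r x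
    unfolding popG_deriv_def by (simp add: algebra_simps)
  fix x :: 'a
  have "\<bar>\<integral>y. mix_density s y * (tanh (t \<bullet> y) * (x \<bullet> y)) \<partial>lborel\<bar>
      \<le> (\<integral>y. norm x * (mix_density s y * norm y) \<partial>lborel)"
  proof (rule integral_abs_bound_integral[OF integrable_mix_density_tanh_inner])
    show "integrable lborel (\<lambda>y. norm x * (mix_density s y * norm y))"
      by (intro Bochner_Integration.integrable_mult_right integrable_mix_density_norm)
    fix y
    have "\<bar>tanh (t \<bullet> y) * (x \<bullet> y)\<bar> \<le> 1 * (norm x * norm y)"
      unfolding abs_mult using abs_tanh_le_1 Cauchy_Schwarz_ineq2[of x y] by (intro mult_mono) auto
    then show "\<bar>mix_density s y * (tanh (t \<bullet> y) * (x \<bullet> y))\<bar> \<le> norm x * (mix_density s y * norm y)"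
      using mult_left_mono[of _ _ "mix_density s y"] mix_density_pos[of s y]
      by (fastforce simp: abs_mult mult_ac)
  qed
  then show "norm (popG_deriv s t x) \<le> norm x * ((\<integral>y. mix_density s y * norm y \<partial>lborel) + norm t)"
    unfolding popG_deriv_def real_norm_def
    using Cauchy_Schwarz_ineq2[of t x] by (simp add: distrib_left mult.commute)
qed

lemma popG_has_derivative: "(popG s has_derivative popG_deriv s t) (at t)"
  unfolding has_derivative_at_alt
proof (intro conjI allI impI bounded_linear_popG_deriv)
  fix e :: real
  assume e: "e > 0"
  define C where "C = 1/2 + (\<integral>y. mix_density s y * norm y ^ 2 \<partial>lborel)"
  have "0 \<le> (\<integral>y. mix_density s y * norm y ^ 2 \<partial>lborel)"
    using mix_density_pos[of s] by (intro integral_nonneg_AE AE_I2) (simp add: less_imp_le)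
  then have C: "C > 0"
    unfolding C_def by simp
  show "\<exists>d>0. \<forall>y. norm (y - t) < d \<longrightarrow> norm (popG s y - popG s t - popG_deriv s t (y - t)) \<le> e * norm (y - t)"
  proof (intro exI[of _ "e / C"] conjI allI impI)
    fix y
    assume y: "norm (y - t) < e / C"
    have "norm (popG s y - popG s t - popG_deriv s t (y - t)) \<le> (C * norm (y - t)) * norm (y - t)"
      using popG_taylor[of s t "y - t"] unfolding C_def by (simp add: power2_eq_square mult_ac)
    also have "\<dots> \<le> e * norm (y - t)"
      using y C by (intro mult_right_mono) (auto simp: field_simps)
    finally show "norm (popG s y - popG s t - popG_deriv s t (y - t)) \<le> e * norm (y - t)" .
  qed (use e C in simp)
qed

lemma stationary_point_popG_iff: "stationary_point (popG s) t \<longleftrightarrow> popG_deriv s t = (\<lambda>h. 0)"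
  unfolding stationary_point_def
  using popG_has_derivative[of s t] has_derivative_unique by metis

text \<open>Gibbs' inequality: \<open>popG s s - popG s t\<close> is a Kullback--Leibler divergence.\<close>
lemma popG_le_popG_self: "popG s t \<le> popG s (s::'a::euclidean_space)"
proof -
  have "popG s t - popG s s
      = (\<integral>y. mix_density s y * ln (mix_density t y) - mix_density s y * ln (mix_density s y) \<partial>lborel)"
    unfolding popG_def
    by (rule Bochner_Integration.integral_diff[symmetric]) (fact integrable_mix_density_ln_mix_density)+
  also have "\<dots> \<le> (\<integral>y. mix_density t y - mix_density s y \<partial>lborel)"
  proof (rule Bochner_Integration.integral_mono)
    fix y :: 'a
    have t: "mix_density t y > 0" and s: "mix_density s y > 0"
      using mix_density_pos by auto
    have "mix_density s y * ln (mix_density t y / mix_density s y)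
        \<le> mix_density s y * (mix_density t y / mix_density s y - 1)"
      using t s by (intro mult_left_mono ln_le_minus_one) auto
    then show "mix_density s y * ln (mix_density t y) - mix_density s y * ln (mix_density s y)
        \<le> mix_density t y - mix_density s y"
      using t s by (simp add: ln_div algebra_simps)
  qed (intro Bochner_Integration.integrable_diff integrable_mix_density_ln_mix_density
      integrable_mix_density)+
  also have "\<dots> = 0"
    using integral_mix_density[of t] integral_mix_density[of s]
      integrable_mix_density[of t] integrable_mix_density[of s] by simp
  finally show ?thesis by simp
qed

section \<open>A Gaussian integration-by-parts identity\<close>

lemma integrable_std_normal_density_mult_bounded:
  fixes f :: "'a::euclidean_space \<Rightarrow> real"
  assumes [measurable]: "f \<in> borel_measurable borel" and f: "\<And>z. \<bar>f z\<bar> \<le> B"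
  shows "integrable lborel (\<lambda>z. \<phi> z * f z)"
proof -
  have "\<bar>f z\<bar> \<le> B * (1 + norm z ^ 2)" for z
    using f[of z] mult_left_mono[of 1 "1 + norm z ^ 2" B] order_trans[OF abs_ge_zero f[of z]] by simp
  then show ?thesis
    using integrable_std_normal_density_mult_quadratic[of f B 0] by simp
qed

lemma integrable_std_normal_density_exp_abs_inner:
  "integrable lborel (\<lambda>w::'a::euclidean_space. \<phi> w * exp \<bar>u \<bullet> w\<bar> * (1 + norm w ^ 2))"
proof (rule integrable_bound_abs)
  define c where "c = exp (norm u ^ 2 / 2)"
  show "integrable lborel (\<lambda>w. c * (\<phi> (w - u) * (1 + norm w ^ 2)) + c * (\<phi> (w - - u) * (1 + norm w ^ 2)))"
    by (intro Bochner_Integration.integrable_add Bochner_Integration.integrable_mult_right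
        integrable_std_normal_density_translate_quadratic)
  fix w :: 'a
  have "\<phi> w * exp (u \<bullet> w) = c * \<phi> (w - u)" "\<phi> w * exp (- (u \<bullet> w)) = c * \<phi> (w - - u)"
    unfolding c_def std_normal_density_diff by (simp_all add: exp_minus field_simps)
  moreover have "exp \<bar>u \<bullet> w\<bar> \<le> exp (u \<bullet> w) + exp (- (u \<bullet> w))"
    by (cases "u \<bullet> w \<ge> 0") (simp_all add: add_increasing2 add_increasing)
  then have "\<phi> w * exp \<bar>u \<bullet> w\<bar> * (1 + norm w ^ 2)
      \<le> (\<phi> w * exp (u \<bullet> w) + \<phi> w * exp (- (u \<bullet> w))) * (1 + norm w ^ 2)"
    using std_normal_density_pos[of w] by (intro mult_right_mono) (simp_all add: distrib_left[symmetric])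
  ultimately show "\<bar>\<phi> w * exp \<bar>u \<bullet> w\<bar> * (1 + norm w ^ 2)\<bar>
      \<le> c * (\<phi> (w - u) * (1 + norm w ^ 2)) + c * (\<phi> (w - - u) * (1 + norm w ^ 2))"
    using std_normal_density_pos[of w] by (simp add: algebra_simps)
qed measurable

text \<open>Second-order remainder of \<open>r \<mapsto> \<phi>(w - r u) / \<phi>(w)\<close>, with \<open>p = u \<bullet> w\<close> and \<open>q = \<bar>u\<bar>\<^sup>2\<close>.\<close>
lemma exp_tilt_taylor:
  fixes p q r :: real
  assumes q: "q \<ge> 0" and r: "0 < r" "r \<le> 1"
  shows "\<bar>exp (- (r^2 * q) / 2) * exp (r * p) - 1 - r * p\<bar> \<le> r^2 * ((\<bar>p\<bar> + q)^2 * exp q * exp \<bar>p\<bar> + q)"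
proof -
  define x where "x = r * p - r^2 * q / 2"
  have "r^2 * q \<le> r * q"
    using r q by (intro mult_right_mono) (simp_all add: power2_eq_square mult_le_cancel_left1)
  moreover have "\<bar>x\<bar> \<le> r * \<bar>p\<bar> + r^2 * q / 2"
    unfolding x_def using r q abs_triangle_ineq4[of "r * p" "r^2 * q / 2"] by (simp add: abs_mult)
  moreover have "0 \<le> r^2 * q"
    using q by simp
  ultimately have "\<bar>x\<bar> \<le> r * (\<bar>p\<bar> + q)"
    by (simp add: algebra_simps)
  then have x: "\<bar>x\<bar> \<le> \<bar>p\<bar> + q" "x^2 \<le> r^2 * (\<bar>p\<bar> + q)^2"
    using mult_left_le_one_le[of "\<bar>p\<bar> + q" r] r q power_mono[of "\<bar>x\<bar>" "r * (\<bar>p\<bar> + q)" 2]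
    by (simp_all add: power_mult_distrib)
  have "\<bar>exp x - 1 - r * p\<bar> \<le> \<bar>exp x - 1 - x\<bar> + r^2 * q / 2"
    unfolding x_def using q abs_triangle_ineq4[of "exp x - 1 - x" "r^2 * q / 2"] by (simp add: x_def)
  also have "\<dots> \<le> exp \<bar>x\<bar> * x^2 + r^2 * q"
    using exp_taylor[of x] q by (simp add: add_mono)
  also have "\<dots> \<le> (exp q * exp \<bar>p\<bar>) * (r^2 * (\<bar>p\<bar> + q)^2) + r^2 * q"
    using x by (intro add_right_mono mult_mono) (simp_all add: exp_add[symmetric] add.commute)
  finally have "\<bar>exp x - 1 - r * p\<bar> \<le> (exp q * exp \<bar>p\<bar>) * (r^2 * (\<bar>p\<bar> + q)^2) + r^2 * q" .
  moreover have "exp (- (r^2 * q) / 2) * exp (r * p) = exp x"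
    unfolding x_def by (simp add: exp_add[symmetric])
  ultimately show ?thesis
    by (simp add: algebra_simps)
qed

lemma std_normal_density_translate_remainder_le:
  fixes u w :: "'a::euclidean_space"
  defines "q \<equiv> norm u ^ 2"
  assumes r: "0 < r" "r \<le> 1"
  shows "\<bar>\<phi> (w - r *\<^sub>R u) - \<phi> w - r * ((u \<bullet> w) * \<phi> w)\<bar>
    \<le> r^2 * (\<phi> w * ((2 * q + 2 * q^2) * exp q * exp \<bar>u \<bullet> w\<bar> * (1 + norm w ^ 2) + q))"
proof -
  have "(\<bar>u \<bullet> w\<bar> + q)^2 \<le> 2 * \<bar>u \<bullet> w\<bar>^2 + 2 * q^2"
    by (rule power2_add_le)
  also have "\<dots> \<le> 2 * (q * norm w ^ 2) + 2 * q^2"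
    using Cauchy_Schwarz_ineq[of u w] by (simp add: q_def power2_norm_eq_inner)
  also have "\<dots> \<le> (2 * q + 2 * q^2) * (1 + norm w ^ 2)"
    unfolding q_def by (simp add: algebra_simps)
  finally have bound: "(\<bar>u \<bullet> w\<bar> + q)^2 * exp q * exp \<bar>u \<bullet> w\<bar> + q
      \<le> (2 * q + 2 * q^2) * exp q * exp \<bar>u \<bullet> w\<bar> * (1 + norm w ^ 2) + q"
    by (simp add: mult_right_mono mult.commute mult.left_commute)
  have "\<phi> (w - r *\<^sub>R u) - \<phi> w - r * ((u \<bullet> w) * \<phi> w)
      = \<phi> w * (exp (- (r^2 * q) / 2) * exp (r * (u \<bullet> w)) - 1 - r * (u \<bullet> w))"
    unfolding std_normal_density_diff[of w "r *\<^sub>R u"] q_def by (simp add: algebra_simps power_mult_distrib)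
  also have "\<bar>\<dots>\<bar> \<le> \<phi> w * (r^2 * ((\<bar>u \<bullet> w\<bar> + q)^2 * exp q * exp \<bar>u \<bullet> w\<bar> + q))"
    unfolding abs_mult abs_of_pos[OF std_normal_density_pos]
    using std_normal_density_pos[of w] exp_tilt_taylor[of q r "u \<bullet> w"] r
    by (intro mult_left_mono) (auto simp: q_def)
  also have "\<dots> \<le> r^2 * (\<phi> w * ((2 * q + 2 * q^2) * exp q * exp \<bar>u \<bullet> w\<bar> * (1 + norm w ^ 2) + q))"
    using std_normal_density_pos[of w] mult_left_mono[OF bound, of "r^2"]
    by (simp add: mult.left_commute)
  finally show ?thesis .
qed

lemma std_normal_density_translate_expansion:
  fixes T :: "'a::euclidean_space \<Rightarrow> real" and u :: 'a
  assumes [measurable]: "T \<in> borel_measurable borel" and T: "\<And>w. \<bar>T w\<bar> \<le> 1"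
  obtains C where "\<And>r. 0 < r \<Longrightarrow> r \<le> 1 \<Longrightarrow>
    \<bar>(\<integral>w. \<phi> (w - r *\<^sub>R u) * T w \<partial>lborel) - (\<integral>w. \<phi> w * T w \<partial>lborel)
      - r * (\<integral>w. \<phi> w * ((u \<bullet> w) * T w) \<partial>lborel)\<bar> \<le> C * r^2"
proof -
  define q where "q = norm u ^ 2"
  define M where "M w = \<phi> w * ((2 * q + 2 * q^2) * exp q * exp \<bar>u \<bullet> w\<bar> * (1 + norm w ^ 2) + q)" for w
  have "M = (\<lambda>w. (2 * q + 2 * q^2) * exp q * (\<phi> w * exp \<bar>u \<bullet> w\<bar> * (1 + norm w ^ 2)) + q * \<phi> w)"
    by (simp add: M_def fun_eq_iff algebra_simps)
  then have int_M: "integrable lborel M"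
    by (simp add: integrable_std_normal_density_exp_abs_inner integrable_std_normal_density)
  have int_T: "integrable lborel (\<lambda>w. \<phi> w * T w)"
    by (rule integrable_std_normal_density_mult_bounded[OF _ T]) measurable
  have int_uT: "integrable lborel (\<lambda>w. \<phi> w * ((u \<bullet> w) * T w))"
  proof (rule integrable_std_normal_density_mult_quadratic[where m=0 and C="norm u", simplified])
    show "\<bar>(u \<bullet> w) * T w\<bar> \<le> norm u * (1 + norm w ^ 2)" for w
      using abs_inner_le_quadratic[of u w] T[of w]
      by (metis abs_ge_zero abs_mult mult_right_le_one_le order_trans)
  qed measurable
  have int_rT: "integrable lborel (\<lambda>w. \<phi> (w - r *\<^sub>R u) * T w)" for r
  proof (rule integrable_std_normal_density_mult_quadratic[where C=1])
    show "\<bar>T w\<bar> \<le> 1 * (1 + norm w ^ 2)" for w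
      using T[of w] by (simp add: add_increasing2)
  qed measurable
  show ?thesis
  proof (rule that[of "\<integral>w. M w \<partial>lborel"])
    fix r :: real
    assume r: "0 < r" "r \<le> 1"
    define F where "F w = \<phi> (w - r *\<^sub>R u) * T w - \<phi> w * T w - r * (\<phi> w * ((u \<bullet> w) * T w))" for w
    have "\<bar>F w\<bar> \<le> r^2 * M w" for w
    proof -
      have "\<bar>F w\<bar> = \<bar>T w\<bar> * \<bar>\<phi> (w - r *\<^sub>R u) - \<phi> w - r * ((u \<bullet> w) * \<phi> w)\<bar>"
        unfolding F_def abs_mult[symmetric] by (simp add: algebra_simps)
      also have "\<dots> \<le> 1 * (r^2 * M w)"
        using T[of w] std_normal_density_translate_remainder_le[OF r, where u=u and w=w]
        unfolding M_def q_def by (intro mult_mono) auto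
      finally show ?thesis
        by simp
    qed
    then have "\<bar>\<integral>w. F w \<partial>lborel\<bar> \<le> (\<integral>w. r^2 * M w \<partial>lborel)"
      unfolding F_def
      by (intro integral_abs_bound_integral Bochner_Integration.integrable_diff
          Bochner_Integration.integrable_mult_right int_rT int_T int_uT int_M)
    moreover have "(\<integral>w. F w \<partial>lborel) = (\<integral>w. \<phi> (w - r *\<^sub>R u) * T w \<partial>lborel)
        - (\<integral>w. \<phi> w * T w \<partial>lborel) - r * (\<integral>w. \<phi> w * ((u \<bullet> w) * T w) \<partial>lborel)"
      unfolding F_def using int_rT[of r] int_T int_uT by simp
    ultimately show "\<bar>(\<integral>w. \<phi> (w - r *\<^sub>R u) * T w \<partial>lborel) - (\<integral>w. \<phi> w * T w \<partial>lborel)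
        - r * (\<integral>w. \<phi> w * ((u \<bullet> w) * T w) \<partial>lborel)\<bar> \<le> (\<integral>w. M w \<partial>lborel) * r^2"
      by (simp add: mult.commute)
  qed
qed

lemma std_normal_density_tanh_shift_expansion:
  fixes a :: "'a::euclidean_space \<Rightarrow> real"
  assumes [measurable]: "a \<in> borel_measurable borel"
  shows "\<bar>(\<integral>z. \<phi> z * tanh (a z + c) \<partial>lborel) - (\<integral>z. \<phi> z * tanh (a z) \<partial>lborel)
    - c * (\<integral>z. \<phi> z * (1 - tanh (a z) ^ 2) \<partial>lborel)\<bar> \<le> 2 * c^2"
proof -
  have int_tanh: "integrable lborel (\<lambda>z. \<phi> z * tanh (a z + d))" for d
    by (rule integrable_std_normal_density_mult_bounded[OF _ abs_tanh_le_1]) measurable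
  have int_sech: "integrable lborel (\<lambda>z. \<phi> z * (1 - tanh (a z) ^ 2))"
  proof (rule integrable_std_normal_density_mult_bounded)
    show "\<bar>1 - tanh (a z) ^ 2\<bar> \<le> 1" for z
      using tanh_power2_le_1[of "a z"] by simp
  qed measurable
  define F where "F z = \<phi> z * tanh (a z + c) - \<phi> z * tanh (a z + 0) - c * (\<phi> z * (1 - tanh (a z) ^ 2))" for z
  have int_F: "integrable lborel F"
    unfolding F_def
    by (intro Bochner_Integration.integrable_diff Bochner_Integration.integrable_mult_right
        int_tanh int_sech)
  have "\<bar>\<integral>z. F z \<partial>lborel\<bar> \<le> (\<integral>z. 2 * c^2 * \<phi> (z::'a) \<partial>lborel)"
  proof (rule integral_abs_bound_integral[OF int_F])
    show "\<bar>F z\<bar> \<le> 2 * c^2 * \<phi> z" for z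
    proof -
      have "F z = \<phi> z * (tanh (a z + c) - tanh (a z) - (1 - tanh (a z) ^ 2) * c)"
        unfolding F_def by (simp add: algebra_simps)
      then show ?thesis
        using mult_left_mono[OF tanh_taylor[of "a z" c], of "\<phi> z"] std_normal_density_pos[of z]
        by (simp add: abs_mult mult_ac)
    qed
  qed (intro Bochner_Integration.integrable_mult_right integrable_std_normal_density)
  moreover have "(\<integral>z. F z \<partial>lborel) = (\<integral>z. \<phi> z * tanh (a z + c) \<partial>lborel)
      - (\<integral>z. \<phi> z * tanh (a z) \<partial>lborel) - c * (\<integral>z. \<phi> z * (1 - tanh (a z) ^ 2) \<partial>lborel)"
    unfolding F_def using int_tanh[of c] int_tanh[of 0] int_sech by simp
  ultimately show ?thesis
    using integral_std_normal_density[where 'a='a] by simp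
qed

lemma eq_if_abs_diff_le_linear:
  fixes A B K :: real
  assumes "\<And>r. 0 < r \<Longrightarrow> r \<le> 1 \<Longrightarrow> \<bar>A - B\<bar> \<le> K * r"
  shows "A = B"
proof (rule ccontr)
  assume "A \<noteq> B"
  define r where "r = min 1 (\<bar>A - B\<bar> / (2 * (\<bar>K\<bar> + 1)))"
  have r: "0 < r" "r \<le> 1"
    unfolding r_def using \<open>A \<noteq> B\<close> by (auto simp: add_pos_nonneg)
  have "\<bar>A - B\<bar> \<le> (\<bar>K\<bar> + 1) * r"
    using assms[OF r] r by (meson abs_ge_self le_add_same_cancel1 mult_right_mono order.trans zero_le_one less_imp_le add_increasing2)
  also have "\<dots> \<le> (\<bar>K\<bar> + 1) * (\<bar>A - B\<bar> / (2 * (\<bar>K\<bar> + 1)))"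
    unfolding r_def by (intro mult_left_mono) auto
  also have "\<dots> = \<bar>A - B\<bar> / 2"
    using abs_ge_zero[of K] by (simp add: field_simps)
  finally show False
    using \<open>A \<noteq> B\<close> by simp
qed

text \<open>Stein's identity \<open>E[(u \<bullet> Z) g(Z)] = E[u \<bullet> \<nabla>g(Z)]\<close> for \<open>g(z) = tanh (m + t \<bullet> z)\<close>. Instead of
  integrating by parts, both sides arise as the first-order term of \<open>J r = E[g(Z + r u)]\<close>: once by
  expanding \<open>tanh\<close>, once by moving the translation onto the density \<open>\<phi>\<close>.\<close>
lemma std_normal_stein_tanh:
  fixes u t :: "'a::euclidean_space"
  shows "(\<integral>z. \<phi> z * ((u \<bullet> z) * tanh (m + t \<bullet> z)) \<partial>lborel)
    = (t \<bullet> u) * (\<integral>z. \<phi> z * (1 - tanh (m + t \<bullet> z) ^ 2) \<partial>lborel)"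
proof -
  define T where "T z = tanh (m + t \<bullet> z)" for z
  define J where "J r = (\<integral>z. \<phi> z * tanh (m + t \<bullet> z + r * (t \<bullet> u)) \<partial>lborel)" for r
  define A where "A = (\<integral>z. \<phi> z * ((u \<bullet> z) * T z) \<partial>lborel)"
  define B where "B = (\<integral>z. \<phi> z * (1 - T z ^ 2) \<partial>lborel)"
  have J_translate: "J r = (\<integral>w. \<phi> (w - r *\<^sub>R u) * T w \<partial>lborel)" for r
    unfolding J_def T_def
    using lborel_integral_translate[of "\<lambda>w. \<phi> (w - r *\<^sub>R u) * tanh (m + t \<bullet> w)" "r *\<^sub>R u"]
    by (simp add: inner_add_right add_ac)
  obtain C where C: "\<And>r. 0 < r \<Longrightarrow> r \<le> 1 \<Longrightarrow> \<bar>J r - J 0 - r * A\<bar> \<le> C * r^2"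
    using std_normal_density_translate_expansion[of T u] abs_tanh_le_1
    unfolding J_translate A_def T_def by (auto simp: mult_ac)
  have tanh: "\<bar>J r - J 0 - r * (t \<bullet> u) * B\<bar> \<le> 2 * (t \<bullet> u)^2 * r^2" for r
    using std_normal_density_tanh_shift_expansion[of "\<lambda>z. m + t \<bullet> z" "r * (t \<bullet> u)"]
    unfolding J_def B_def T_def by (simp add: power_mult_distrib mult_ac)
  have "A = (t \<bullet> u) * B"
  proof (rule eq_if_abs_diff_le_linear[where K="2 * (t \<bullet> u)^2 + C"])
    fix r :: real
    assume r: "0 < r" "r \<le> 1"
    have "r * \<bar>A - (t \<bullet> u) * B\<bar> = \<bar>r * (A - (t \<bullet> u) * B)\<bar>"
      using r by (simp add: abs_mult)
    also have "\<dots> = \<bar>(J r - J 0 - r * (t \<bullet> u) * B) - (J r - J 0 - r * A)\<bar>"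
      by (simp add: algebra_simps)
    also have "\<dots> \<le> r * ((2 * (t \<bullet> u)^2 + C) * r)"
      using abs_triangle_ineq4[of "J r - J 0 - r * (t \<bullet> u) * B" "J r - J 0 - r * A"] tanh[of r] C[OF r]
      by (simp add: power2_eq_square algebra_simps)
    finally show "\<bar>A - (t \<bullet> u) * B\<bar> \<le> (2 * (t \<bullet> u)^2 + C) * r"
      using r by simp
  qed
  then show ?thesis
    unfolding A_def B_def T_def .
qed

section \<open>Stationary points and the sign of the derivative\<close>

lemma global_max_at_popG_self: "global_max_at (popG s) s"
  unfolding global_max_at_def using popG_le_popG_self by blast

lemma global_max_at_popG_uminus_self: "global_max_at (popG s) (- s)"
  unfolding global_max_at_def by (simp add: popG_uminus popG_le_popG_self)

lemma stationary_point_popG_self: "stationary_point (popG s) (s::'a::euclidean_space)"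
  unfolding stationary_point_popG_iff
  by (rule differential_zero_maxmin[of s UNIV, OF _ _ popG_has_derivative]) (auto intro: popG_le_popG_self)

lemma stationary_point_popG_uminus_self: "stationary_point (popG s) (- (s::'a::euclidean_space))"
  unfolding stationary_point_popG_iff
  by (rule differential_zero_maxmin[of "- s" UNIV, OF _ _ popG_has_derivative])
    (auto simp: popG_uminus popG_le_popG_self)

lemma stationary_point_popG_0: "stationary_point (popG s) (0::'a::euclidean_space)"
  unfolding stationary_point_popG_iff by (rule ext) (simp add: popG_deriv_def)

lemma popG_deriv_scaleR: "popG_deriv s t (c *\<^sub>R h) = c * popG_deriv s t h"
  using bounded_linear_popG_deriv[THEN bounded_linear.linear, THEN linear_cmul] by simp

lemma popG_deriv_uminus_self: "popG_deriv s (- t) (- t) = popG_deriv s t (t::'a::euclidean_space)"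
  unfolding popG_deriv_def by simp

lemma popG_ray_mean_value:
  assumes "0 < k"
  obtains z where "0 < z" "z < k" "popG s (k *\<^sub>R v) - popG s 0 = k * popG_deriv s (z *\<^sub>R v) v"
proof -
  have "((\<lambda>r. popG s (r *\<^sub>R v)) has_real_derivative popG_deriv s (r *\<^sub>R v) v) (at r)" for r
  proof -
    have "((\<lambda>r. r *\<^sub>R v) has_derivative (\<lambda>h. h *\<^sub>R v)) (at r)"
      by (auto intro!: derivative_eq_intros)
    from has_derivative_compose[OF this popG_has_derivative]
    have "((\<lambda>r. popG s (r *\<^sub>R v)) has_derivative (\<lambda>h. popG_deriv s (r *\<^sub>R v) (h *\<^sub>R v))) (at r)" .
    moreover have "(\<lambda>h. popG_deriv s (r *\<^sub>R v) (h *\<^sub>R v)) = (*) (popG_deriv s (r *\<^sub>R v) v)"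
      by (simp add: fun_eq_iff popG_deriv_scaleR mult.commute)
    ultimately show ?thesis
      unfolding has_field_derivative_def by simp
  qed
  then obtain z where "0 < z" "z < k"
    "popG s (k *\<^sub>R v) - popG s (0 *\<^sub>R v) = (k - 0) * popG_deriv s (z *\<^sub>R v) v"
    using MVT2[OF assms, of "\<lambda>r. popG s (r *\<^sub>R v)" "\<lambda>r. popG_deriv s (r *\<^sub>R v) v"] by blast
  with that show ?thesis
    by simp
qed

lemma integral_pos_if_continuous:
  fixes f :: "'a::euclidean_space \<Rightarrow> real"
  assumes "integrable lborel f" "continuous_on UNIV f" "\<And>x. 0 \<le> f x" "0 < f x0"
  shows "0 < integral\<^sup>L lborel f"
proof -
  have "integral\<^sup>L lborel f \<noteq> 0"
  proof
    assume "integral\<^sup>L lborel f = 0"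
    then have "AE x in lborel. f x = 0"
      using integral_nonneg_eq_0_iff_AE[OF assms(1)] assms(3) by auto
    then obtain N where N: "{x. f x \<noteq> 0} \<subseteq> N" "N \<in> null_sets lborel"
      by (auto elim!: AE_E simp: null_sets_def)
    then have "negligible N"
      by (simp add: negligible_iff_null_sets null_sets_completionI)
    then have "negligible {x. 0 < f x}"
      by (rule negligible_subset) (use N in auto)
    moreover have "open {x. 0 < f x}"
      using open_Collect_less[of "\<lambda>_. 0" f] assms(2) by (simp add: continuous_on_const)
    ultimately show False
      using open_not_negligible assms(4) by blast
  qed
  moreover have "0 \<le> integral\<^sup>L lborel f"
    using assms(3) by (intro integral_nonneg_AE) simp
  ultimately show ?thesis
    by linarith
qed

subsection \<open>Directions orthogonal to \<open>s\<close>\<close>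

lemma integral_std_normal_density_tanh_power2_pos:
  fixes t :: "'a::euclidean_space"
  assumes "t \<noteq> 0"
  shows "0 < (\<integral>z. \<phi> z * tanh (m + t \<bullet> z) ^ 2 \<partial>lborel)"
proof (rule integral_pos_if_continuous)
  show "integrable lborel (\<lambda>z. \<phi> z * tanh (m + t \<bullet> z) ^ 2)"
    by (rule integrable_std_normal_density_mult_bounded[where B=1]) (auto simp: tanh_power2_le_1)
  show "continuous_on UNIV (\<lambda>z. \<phi> z * tanh (m + t \<bullet> z) ^ 2)"
    by (intro continuous_intros continuous_on_std_normal_density)
      (auto simp: less_imp_neq[OF cosh_real_pos, symmetric])
  show "0 \<le> \<phi> z * tanh (m + t \<bullet> z) ^ 2" for z
    using std_normal_density_pos[of z] by simp
  define z0 where "z0 = ((1 - m) / norm t ^ 2) *\<^sub>R t"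
  have "m + t \<bullet> z0 = 1"
    unfolding z0_def using assms by (simp add: power2_norm_eq_inner)
  then show "0 < \<phi> z0 * tanh (m + t \<bullet> z0) ^ 2"
    using std_normal_density_pos[of z0] by simp
qed

lemma integral_std_normal_density_translate_tanh_inner_orthogonal:
  fixes s t u :: "'a::euclidean_space"
  assumes "u \<bullet> s = 0"
  shows "(\<integral>y. \<phi> (y - s) * (tanh (t \<bullet> y) * (u \<bullet> y)) \<partial>lborel)
    = (t \<bullet> u) * (1 - (\<integral>z. \<phi> z * tanh (t \<bullet> s + t \<bullet> z) ^ 2 \<partial>lborel))"
proof -
  have int: "integrable lborel (\<lambda>z. \<phi> (z::'a) * tanh (t \<bullet> s + t \<bullet> z) ^ 2)"
    by (rule integrable_std_normal_density_mult_bounded[where B=1]) (auto simp: tanh_power2_le_1)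
  have "(\<integral>y. \<phi> (y - s) * (tanh (t \<bullet> y) * (u \<bullet> y)) \<partial>lborel)
      = (\<integral>z. \<phi> z * ((u \<bullet> z) * tanh (t \<bullet> s + t \<bullet> z)) \<partial>lborel)"
    using assms lborel_integral_translate[of "\<lambda>y. \<phi> (y - s) * (tanh (t \<bullet> y) * (u \<bullet> y))" s]
    by (simp add: inner_add_right algebra_simps)
  also have "\<dots> = (t \<bullet> u) * (\<integral>z. \<phi> z * (1 - tanh (t \<bullet> s + t \<bullet> z) ^ 2) \<partial>lborel)"
    by (rule std_normal_stein_tanh)
  also have "(\<integral>z. \<phi> z * (1 - tanh (t \<bullet> s + t \<bullet> z) ^ 2) \<partial>lborel)
      = (\<integral>z. \<phi> z - \<phi> z * tanh (t \<bullet> s + t \<bullet> z) ^ 2 \<partial>lborel)"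
    by (simp add: right_diff_distrib)
  also have "\<dots> = 1 - (\<integral>z. \<phi> z * tanh (t \<bullet> s + t \<bullet> z) ^ 2 \<partial>lborel)"
    by (simp add: Bochner_Integration.integral_diff[OF integrable_std_normal_density int]
        integral_std_normal_density)
  finally show ?thesis .
qed

text \<open>Moving off the line through \<open>s\<close> always decreases \<open>popG s\<close>: by Stein's identity the
  orthogonal part of the gradient is \<open>-(t \<bullet> u)\<close> times a strictly positive Gaussian average.\<close>
lemma popG_deriv_orthogonal_neg:
  fixes s t u :: "'a::euclidean_space"
  assumes us: "u \<bullet> s = 0" and tu: "t \<bullet> u > 0"
  shows "popG_deriv s t u < 0"
proof -
  have "t \<noteq> 0"
    using tu by auto
  have int: "integrable lborel (\<lambda>y. \<phi> (y - m) * (tanh (t \<bullet> y) * (u \<bullet> y)))" for m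
  proof (rule integrable_std_normal_density_mult_quadratic[where C="norm u"])
    show "\<bar>tanh (t \<bullet> y) * (u \<bullet> y)\<bar> \<le> norm u * (1 + norm y ^ 2)" for y
      using abs_inner_le_quadratic[of u y] abs_tanh_le_1[of "t \<bullet> y"]
      by (metis abs_ge_zero abs_mult mult_left_le_one_le order_trans)
  qed measurable
  define P where "P m = (\<integral>z. \<phi> z * tanh (t \<bullet> m + t \<bullet> z) ^ 2 \<partial>lborel)" for m
  have "(\<integral>y. mix_density s y * (tanh (t \<bullet> y) * (u \<bullet> y)) \<partial>lborel)
      = 1/2 * (\<integral>y. \<phi> (y - s) * (tanh (t \<bullet> y) * (u \<bullet> y)) \<partial>lborel)
        + 1/2 * (\<integral>y. \<phi> (y - - s) * (tanh (t \<bullet> y) * (u \<bullet> y)) \<partial>lborel)"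
    unfolding mix_density_def distrib_right
    using int[of s] int[of "- s"] by (simp add: mult.assoc)
  also have "\<dots> = 1/2 * ((t \<bullet> u) * (1 - P s)) + 1/2 * ((t \<bullet> u) * (1 - P (- s)))"
    unfolding P_def using us
    by (simp only: integral_std_normal_density_translate_tanh_inner_orthogonal inner_minus_right neg_equal_0_iff_equal)
  finally have "popG_deriv s t u = - (t \<bullet> u) * (P s + P (- s)) / 2"
    unfolding popG_deriv_def by (simp add: algebra_simps inner_commute)
  moreover have "P s > 0" "P (- s) > 0"
    unfolding P_def by (rule integral_std_normal_density_tanh_power2_pos[OF \<open>t \<noteq> 0\<close>])+
  ultimately show ?thesis
    using tu by (simp add: mult_pos_pos)
qed

subsection \<open>The line through \<open>s\<close>\<close>

lemma mult_tanh_strict_mono: "0 \<le> a \<Longrightarrow> a < b \<Longrightarrow> a * tanh a < b * tanh (b::real)"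
  by (rule le_less_trans[OF mult_left_mono mult_strict_right_mono]) auto

lemma mult_tanh_abs: "x * tanh x = \<bar>x\<bar> * tanh \<bar>x::real\<bar>"
  by (cases "x \<ge> 0") auto

lemma cosh_ratio_strict_mono:
  fixes \<alpha> \<beta> :: real
  assumes \<alpha>\<beta>: "0 < \<beta>" "\<beta> < \<alpha>" and ab: "0 \<le> a" "a < b"
  shows "cosh (\<alpha> * a) / cosh (\<beta> * a) < cosh (\<alpha> * b) / cosh (\<beta> * b)"
proof -
  define R where "R x = cosh (\<alpha> * x) / cosh (\<beta> * x)" for x
  define R' where "R' x = (\<alpha> * sinh (\<alpha> * x) * cosh (\<beta> * x) - cosh (\<alpha> * x) * (\<beta> * sinh (\<beta> * x)))
      / (cosh (\<beta> * x))^2" for x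
  have "(R has_real_derivative R' x) (at x)" for x
    unfolding R_def R'_def using cosh_real_pos[of "\<beta> * x"]
    by (auto intro!: derivative_eq_intros simp: power2_eq_square algebra_simps)
  then obtain z where z: "a < z" "z < b" "R b - R a = (b - a) * R' z"
    using MVT2[OF ab(2), of R R'] by blast
  have "\<beta> * tanh (\<beta> * z) < \<alpha> * tanh (\<alpha> * z)"
    using \<alpha>\<beta> z ab mult_tanh_strict_mono[of "\<beta> * z" "\<alpha> * z"]
    by (simp add: algebra_simps mult_strict_left_mono)
  then have "\<beta> * sinh (\<beta> * z) * cosh (\<alpha> * z) < \<alpha> * sinh (\<alpha> * z) * cosh (\<beta> * z)"
    using cosh_real_pos[of "\<alpha> * z"] cosh_real_pos[of "\<beta> * z"] by (simp add: tanh_def field_simps)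
  then have "R' z > 0"
    unfolding R'_def using cosh_real_pos[of "\<beta> * z"] by (intro divide_pos_pos) (auto simp: algebra_simps)
  then have "0 < (b - a) * R' z"
    using z by (intro mult_pos_pos) auto
  then show ?thesis
    using z(3) unfolding R_def by simp
qed

lemma cosh_ratio_crossing:
  fixes \<alpha> \<beta> L :: real
  assumes \<alpha>\<beta>: "0 < \<beta>" "\<beta> < \<alpha>" and L: "0 < L" "L < 1"
  obtains x0 where "x0 > 0" "L * (cosh (\<alpha> * x0) / cosh (\<beta> * x0)) = 1"
proof -
  define R where "R x = L * (cosh (\<alpha> * x) / cosh (\<beta> * x))" for x
  define X where "X = ln (4 / L) / (\<alpha> - \<beta>)"
  have X: "X > 0"
    unfolding X_def using L \<alpha>\<beta> by (auto intro!: divide_pos_pos)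
  have "2 / L \<le> cosh (\<alpha> * X) / cosh (\<beta> * X)"
  proof -
    have "(exp (\<alpha> * X) / 2) / exp (\<beta> * X) \<le> cosh (\<alpha> * X) / cosh (\<beta> * X)"
      using \<alpha>\<beta> X cosh_real_pos[of "\<beta> * X"] by (intro frac_le) (auto simp: cosh_field_def)
    moreover have "(exp (\<alpha> * X) / 2) / exp (\<beta> * X) = exp ((\<alpha> - \<beta>) * X) / 2"
      by (simp add: exp_diff left_diff_distrib)
    moreover have "exp ((\<alpha> - \<beta>) * X) = 4 / L"
      unfolding X_def using \<alpha>\<beta> L by simp
    ultimately show ?thesis
      by simp
  qed
  then have "L * (2 / L) \<le> R X"
    unfolding R_def using L by (intro mult_left_mono) auto
  then have "1 \<le> R X"
    using L by simp
  moreover have "R 0 < 1"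
    unfolding R_def using L by simp
  moreover have "continuous_on {0..X} R"
    unfolding R_def by (intro continuous_intros) (auto simp: less_imp_neq[OF cosh_real_pos, symmetric])
  ultimately obtain x0 where "0 \<le> x0" "R x0 = 1"
    using IVT'[of R 0 1 X] X by auto
  moreover have "x0 \<noteq> 0"
    using \<open>R 0 < 1\<close> \<open>R x0 = 1\<close> by auto
  ultimately have "x0 > 0" "R x0 = 1"
    by auto
  then show ?thesis
    using that[of x0] unfolding R_def by blast
qed

text \<open>With \<open>c = \<bar>s\<bar>\<^sup>2\<close>, \<open>\<phi> y * Q (s \<bullet> y)\<close> is the difference of the mixture densities with parameters
  \<open>\<alpha> s\<close> and \<open>\<beta> s\<close>.\<close>
lemma cosh_difference_sign_change:
  fixes \<alpha> \<beta> c :: real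
  assumes \<alpha>\<beta>: "0 < \<beta>" "\<beta> < \<alpha>" and c: "c > 0"
  defines "Q x \<equiv> exp (- (\<alpha>^2 * c) / 2) * cosh (\<alpha> * x) - exp (- (\<beta>^2 * c) / 2) * cosh (\<beta> * x)"
  obtains x0 where "x0 > 0" "\<And>x. \<bar>x\<bar> < x0 \<Longrightarrow> Q x < 0" "\<And>x. \<bar>x\<bar> > x0 \<Longrightarrow> Q x > 0"
proof -
  define A where "A = exp (- (\<alpha>^2 * c) / 2)"
  define B where "B = exp (- (\<beta>^2 * c) / 2)"
  have A: "A > 0" and B: "B > 0"
    unfolding A_def B_def by auto
  have "\<beta>^2 < \<alpha>^2"
    using \<alpha>\<beta> by (intro power_strict_mono) auto
  then have "A < B"
    unfolding A_def B_def using c by simp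
  define R where "R x = A / B * (cosh (\<alpha> * x) / cosh (\<beta> * x))" for x
  obtain x0 where x0: "x0 > 0" "R x0 = 1"
    using cosh_ratio_crossing[OF \<alpha>\<beta>, of "A / B"] A B \<open>A < B\<close> unfolding R_def by auto
  have R_mono: "R a < R b" if "0 \<le> a" "a < b" for a b
    unfolding R_def using cosh_ratio_strict_mono[OF \<alpha>\<beta> that] A B by (intro mult_strict_left_mono) auto
  have Q_sign: "(Q x < 0 \<longleftrightarrow> R x < 1) \<and> (Q x > 0 \<longleftrightarrow> R x > 1)" for x
  proof -
    obtain P where "P > 0" "Q x = P * (R x - 1)"
    proof
      show "B * cosh (\<beta> * x) > 0"
        using B cosh_real_pos[of "\<beta> * x"] by simp
      show "Q x = B * cosh (\<beta> * x) * (R x - 1)"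
        unfolding Q_def R_def A_def[symmetric] B_def[symmetric] using B cosh_real_pos[of "\<beta> * x"]
        by (simp add: field_simps)
    qed
    then show ?thesis
      by (simp add: mult_less_0_iff zero_less_mult_iff)
  qed
  have Q_even: "Q x = Q \<bar>x\<bar>" for x
    unfolding Q_def by (cases "x \<ge> 0") auto
  show ?thesis
  proof (rule that[OF \<open>x0 > 0\<close>])
    show "Q x < 0" if "\<bar>x\<bar> < x0" for x
    proof -
      have "R \<bar>x\<bar> < R x0"
        using that by (intro R_mono) auto
      then show ?thesis
        using Q_sign[of "\<bar>x\<bar>"] Q_even[of x] x0(2) by simp
    qed
    show "Q x > 0" if "\<bar>x\<bar> > x0" for x
    proof -
      have "R x0 < R \<bar>x\<bar>"
        using that x0 by (intro R_mono) auto
      then show ?thesis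
        using Q_sign[of "\<bar>x\<bar>"] Q_even[of x] x0(2) by simp
    qed
  qed
qed

lemma integral_mix_density_inner_tanh_self:
  "(\<integral>y. mix_density t y * ((t \<bullet> y) * tanh (t \<bullet> y)) \<partial>lborel) = norm (t::'a::euclidean_space) ^ 2"
proof -
  have mix_tanh: "mix_density t y * ((t \<bullet> y) * tanh (t \<bullet> y)) = (t \<bullet> y) / 2 * \<phi> (y - t) - (t \<bullet> y) / 2 * \<phi> (y + t)"
    for y
  proof -
    define p where "p = t \<bullet> y"
    define E where "E = \<phi> y * exp (- (norm t ^ 2) / 2)"
    have "cosh p * tanh p = sinh p"
      using cosh_real_pos[of p] by (simp add: tanh_def)
    then have "mix_density t y * (p * tanh p) = p * E * sinh p"
      unfolding mix_density_eq_cosh p_def[symmetric] E_def by (simp add: mult_ac)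
    also have "\<dots> = p / 2 * (E * exp p) - p / 2 * (E * exp (- p))"
      by (simp add: sinh_field_def field_simps)
    finally show ?thesis
      unfolding std_normal_density_diff std_normal_density_add p_def E_def .
  qed
  have int: "integrable lborel (\<lambda>z. \<phi> (z - m) * (t \<bullet> z))" for m
    by (rule integrable_std_normal_density_mult_quadratic[OF _ abs_inner_le_quadratic]) measurable
  have integral: "(\<integral>y. (t \<bullet> y) / 2 * \<phi> (y - m) \<partial>lborel) = (t \<bullet> m) / 2" for m
  proof -
    have "(\<integral>y. (t \<bullet> y) / 2 * \<phi> (y - m) \<partial>lborel) = (\<integral>z. (t \<bullet> (z + m)) / 2 * \<phi> ((z + m) - m) \<partial>lborel)"
      by (rule lborel_integral_translate[symmetric])
    also have "\<dots> = (\<integral>z. 1/2 * (\<phi> (z - 0) * (t \<bullet> z)) + (t \<bullet> m) / 2 * \<phi> (z::'a) \<partial>lborel)"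
      by (intro Bochner_Integration.integral_cong) (simp_all add: inner_add_right field_simps)
    also have "\<dots> = (\<integral>z. 1/2 * (\<phi> (z - 0) * (t \<bullet> z)) \<partial>lborel) + (\<integral>z. (t \<bullet> m) / 2 * \<phi> (z::'a) \<partial>lborel)"
      by (intro Bochner_Integration.integral_add Bochner_Integration.integrable_mult_right int
          integrable_std_normal_density)
    also have "\<dots> = 1/2 * (\<integral>z. \<phi> (z - 0) * (t \<bullet> z) \<partial>lborel) + (t \<bullet> m) / 2 * (\<integral>z. \<phi> (z::'a) \<partial>lborel)"
      by simp
    also have "(\<integral>z. \<phi> (z - 0) * (t \<bullet> z) \<partial>lborel) = 0"
      using lborel_integral_affine[of "-1" "\<lambda>z. \<phi> z * (t \<bullet> z)" 0]
      by (simp add: std_normal_density_eq)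
    finally show ?thesis
      by (simp add: integral_std_normal_density)
  qed
  have integrable: "integrable lborel (\<lambda>y. (t \<bullet> y) / 2 * \<phi> (y - m))" for m
    using int[of m] by (simp add: mult_ac)
  have "(\<integral>y. mix_density t y * ((t \<bullet> y) * tanh (t \<bullet> y)) \<partial>lborel)
      = (\<integral>y. (t \<bullet> y) / 2 * \<phi> (y - t) - (t \<bullet> y) / 2 * \<phi> (y - - t) \<partial>lborel)"
    unfolding mix_tanh by simp
  also have "\<dots> = (\<integral>y. (t \<bullet> y) / 2 * \<phi> (y - t) \<partial>lborel) - (\<integral>y. (t \<bullet> y) / 2 * \<phi> (y - - t) \<partial>lborel)"
    by (rule Bochner_Integration.integral_diff[OF integrable integrable])
  finally show ?thesis
    unfolding integral by (simp add: power2_norm_eq_inner)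
qed

text \<open>Both mixtures have mass one, so an arbitrary constant \<open>c\<close> may be subtracted from the weight.\<close>
lemma popG_deriv_self_eq:
  "popG_deriv s t t = (\<integral>y. (mix_density s y - mix_density t y) * ((t \<bullet> y) * tanh (t \<bullet> y) - c) \<partial>lborel)"
proof -
  define F where "F y = (t \<bullet> y) * tanh (t \<bullet> y)" for y
  have int: "integrable lborel (\<lambda>y. mix_density u y * F y)" for u
    unfolding F_def using integrable_mix_density_tanh_inner[of u t t] by (simp add: mult_ac)
  have "popG_deriv s t t = (\<integral>y. mix_density s y * F y \<partial>lborel) - (\<integral>y. mix_density t y * F y \<partial>lborel)"
    unfolding popG_deriv_def F_def integral_mix_density_inner_tanh_self
    by (simp add: mult_ac power2_norm_eq_inner)
  also have "\<dots> = (\<integral>y. mix_density s y * F y - mix_density t y * F y \<partial>lborel)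
      - (\<integral>y. c * mix_density s y - c * mix_density t y \<partial>lborel)"
    using Bochner_Integration.integral_diff[OF int[of s] int[of t]]
      Bochner_Integration.integral_diff[OF integrable_mix_density integrable_mix_density, of s t]
    by (simp add: integral_mix_density right_diff_distrib[symmetric])
  also have "\<dots> = (\<integral>y. mix_density s y * F y - mix_density t y * F y
      - (c * mix_density s y - c * mix_density t y) \<partial>lborel)"
    by (intro Bochner_Integration.integral_diff[symmetric] Bochner_Integration.integrable_diff
        Bochner_Integration.integrable_mult_right int integrable_mix_density)
  also have "\<dots> = (\<integral>y. (mix_density s y - mix_density t y) * (F y - c) \<partial>lborel)"
    by (simp add: algebra_simps)
  finally show ?thesis
    unfolding F_def .
qed

text \<open>Taking for \<open>c\<close> the value of the weight on the level set \<open>\<bar>s \<bullet> y\<bar> = x0\<close> where the difference of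
  the two densities changes sign, the integrand of \<open>popG_deriv_self_eq\<close> has constant sign \<open>e\<close>.\<close>
lemma popG_deriv_radial_sign:
  fixes s :: "'a::euclidean_space" and \<kappa> e x0 :: real
  assumes s: "s \<noteq> 0" and \<kappa>: "\<kappa> > 0" and e: "e = 1 \<or> e = -1" and x0: "x0 > 0"
  defines "W x \<equiv> exp (- (norm s ^ 2) / 2) * cosh x - exp (- (\<kappa>^2 * norm s ^ 2) / 2) * cosh (\<kappa> * x)"
  assumes W_inner: "\<And>x. \<bar>x\<bar> < x0 \<Longrightarrow> e * W x < 0" and W_outer: "\<And>x. \<bar>x\<bar> > x0 \<Longrightarrow> e * W x > 0"
  shows "e * popG_deriv s (\<kappa> *\<^sub>R s) (\<kappa> *\<^sub>R s) > 0"
proof -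
  define t where "t = \<kappa> *\<^sub>R s"
  define F where "F x = \<kappa> * x * tanh (\<kappa> * x)" for x
  define c where "c = F x0"
  define g where "g y = e * ((mix_density s y - mix_density t y) * (F (s \<bullet> y) - c))" for y
  have F_t: "F (s \<bullet> y) = (t \<bullet> y) * tanh (t \<bullet> y)" for y
    unfolding F_def t_def by simp
  have g_eq: "g y = \<phi> y * ((e * W (s \<bullet> y)) * (F (s \<bullet> y) - c))" for y
    unfolding g_def W_def t_def mix_density_eq_cosh by (simp add: power_mult_distrib algebra_simps)
  have F_abs: "F x = (\<kappa> * \<bar>x\<bar>) * tanh (\<kappa> * \<bar>x\<bar>)" for x
    unfolding F_def using mult_tanh_abs[of "\<kappa> * x"] \<kappa> by (simp add: abs_mult)
  have F_inner: "F x < c" if "\<bar>x\<bar> < x0" for x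
    unfolding c_def F_abs[of x] F_abs[of x0] using that \<kappa> x0 by (intro mult_tanh_strict_mono) auto
  have F_outer: "F x > c" if "\<bar>x\<bar> > x0" for x
    unfolding c_def F_abs[of x] F_abs[of x0] using that \<kappa> x0 by (intro mult_tanh_strict_mono) auto
  have g_nonneg: "0 \<le> g y" for y
  proof -
    consider "\<bar>s \<bullet> y\<bar> < x0" | "\<bar>s \<bullet> y\<bar> > x0" | "\<bar>s \<bullet> y\<bar> = x0"
      by linarith
    then have "0 \<le> (e * W (s \<bullet> y)) * (F (s \<bullet> y) - c)"
    proof cases
      case 1
      then show ?thesis
        using W_inner[OF 1] F_inner[OF 1] by (intro mult_nonpos_nonpos) simp_all
    next
      case 2
      then show ?thesis
        using W_outer[OF 2] F_outer[OF 2] by simp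
    qed (simp add: c_def F_abs)
    then show ?thesis
      unfolding g_eq using std_normal_density_pos[of y] by simp
  qed
  define y0 where "y0 = (2 * x0 / norm s ^ 2) *\<^sub>R s"
  have "s \<bullet> y0 = 2 * x0"
    unfolding y0_def using s by (simp add: power2_norm_eq_inner)
  then have "0 < (e * W (s \<bullet> y0)) * (F (s \<bullet> y0) - c)"
    using W_outer[of "s \<bullet> y0"] F_outer[of "s \<bullet> y0"] x0 by simp
  then have g_pos: "0 < g y0"
    unfolding g_eq using std_normal_density_pos[of y0] by simp
  have int_F: "integrable lborel (\<lambda>y. mix_density u y * F (s \<bullet> y))" for u
    unfolding F_t using integrable_mix_density_tanh_inner[of u t t] by (simp add: mult_ac)
  have "0 < (\<integral>y. g y \<partial>lborel)"
  proof (rule integral_pos_if_continuous[where f=g, OF _ _ g_nonneg g_pos])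
    show "integrable lborel g"
      unfolding g_def left_diff_distrib right_diff_distrib
      by (intro Bochner_Integration.integrable_mult_right Bochner_Integration.integrable_diff int_F
          Bochner_Integration.integrable_mult_left integrable_mix_density)
    show "continuous_on UNIV g"
      unfolding g_def F_def
      by (intro continuous_intros continuous_on_mix_density)
        (auto simp: less_imp_neq[OF cosh_real_pos, symmetric])
  qed
  also have "(\<integral>y. g y \<partial>lborel) = e * popG_deriv s t t"
    unfolding g_def F_t popG_deriv_self_eq[of s t c] by simp
  finally show ?thesis
    unfolding t_def .
qed

lemma popG_deriv_radial_pos:
  fixes s :: "'a::euclidean_space"
  assumes "s \<noteq> 0" "0 < \<kappa>" "\<kappa> < 1"
  shows "popG_deriv s (\<kappa> *\<^sub>R s) (\<kappa> *\<^sub>R s) > 0"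
proof -
  obtain x0 where "x0 > 0"
    and "\<And>x. \<bar>x\<bar> < x0 \<Longrightarrow> exp (- (1^2 * norm s ^ 2) / 2) * cosh (1 * x)
      - exp (- (\<kappa>^2 * norm s ^ 2) / 2) * cosh (\<kappa> * x) < 0"
    and "\<And>x. \<bar>x\<bar> > x0 \<Longrightarrow> exp (- (1^2 * norm s ^ 2) / 2) * cosh (1 * x)
      - exp (- (\<kappa>^2 * norm s ^ 2) / 2) * cosh (\<kappa> * x) > 0"
    using cosh_difference_sign_change[of \<kappa> 1 "norm s ^ 2"] assms by auto
  then have "1 * popG_deriv s (\<kappa> *\<^sub>R s) (\<kappa> *\<^sub>R s) > 0"
    by (intro popG_deriv_radial_sign assms(1,2)) auto
  then show ?thesis
    by simp
qed

lemma popG_deriv_radial_neg: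
  fixes s :: "'a::euclidean_space"
  assumes "s \<noteq> 0" "1 < \<kappa>"
  shows "popG_deriv s (\<kappa> *\<^sub>R s) (\<kappa> *\<^sub>R s) < 0"
proof -
  obtain x0 where "x0 > 0"
    and "\<And>x. \<bar>x\<bar> < x0 \<Longrightarrow> exp (- (\<kappa>^2 * norm s ^ 2) / 2) * cosh (\<kappa> * x)
      - exp (- (1^2 * norm s ^ 2) / 2) * cosh (1 * x) < 0"
    and "\<And>x. \<bar>x\<bar> > x0 \<Longrightarrow> exp (- (\<kappa>^2 * norm s ^ 2) / 2) * cosh (\<kappa> * x)
      - exp (- (1^2 * norm s ^ 2) / 2) * cosh (1 * x) > 0"
    using cosh_difference_sign_change[of 1 \<kappa> "norm s ^ 2"] assms by auto
  then have "(-1) * popG_deriv s (\<kappa> *\<^sub>R s) (\<kappa> *\<^sub>R s) > 0"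
    using assms by (intro popG_deriv_radial_sign) (auto simp: algebra_simps)
  then show ?thesis
    by simp
qed

lemma popG_lt_popG_scaleR:
  fixes s :: "'a::euclidean_space"
  assumes s: "s \<noteq> 0" and k: "0 < k" "k \<le> 1"
  shows "popG s 0 < popG s (k *\<^sub>R s)"
proof -
  obtain z where z: "0 < z" "z < k" and eq: "popG s (k *\<^sub>R s) - popG s 0 = k * popG_deriv s (z *\<^sub>R s) s"
    using popG_ray_mean_value[OF k(1)] .
  have "0 < popG_deriv s (z *\<^sub>R s) (z *\<^sub>R s)"
    using popG_deriv_radial_pos[OF s, of z] z k by simp
  then have "0 < popG_deriv s (z *\<^sub>R s) s"
    using z by (simp add: popG_deriv_scaleR zero_less_mult_iff)
  then show ?thesis
    using eq k by (simp add: algebra_simps)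
qed

lemma stationary_point_popG_cases:
  fixes s :: "'a::euclidean_space"
  assumes s: "s \<noteq> 0" and "stationary_point (popG s) t"
  shows "t = 0 \<or> t = s \<or> t = - s"
proof (rule ccontr)
  assume t: "\<not> (t = 0 \<or> t = s \<or> t = - s)"
  have deriv_0: "popG_deriv s t h = 0" for h
    using assms(2) unfolding stationary_point_popG_iff by simp
  define c where "c = (t \<bullet> s) / norm s ^ 2"
  define u where "u = t - c *\<^sub>R s"
  have us: "u \<bullet> s = 0"
    unfolding u_def c_def using s by (simp add: inner_diff_left power2_norm_eq_inner)
  show False
  proof (cases "u = 0")
    case False
    have "t \<bullet> u = u \<bullet> u"
      using us unfolding u_def by (simp add: inner_diff_left inner_diff_right inner_commute)
    then have "popG_deriv s t u < 0"
      using False by (intro popG_deriv_orthogonal_neg[OF us]) simp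
    then show False
      using deriv_0 by simp
  next
    case True
    then have tc: "t = c *\<^sub>R s"
      unfolding u_def by simp
    have "c \<noteq> 0" "\<bar>c\<bar> \<noteq> 1"
      using t tc by (auto simp: abs_if split: if_splits)
    moreover have "popG_deriv s (\<bar>c\<bar> *\<^sub>R s) (\<bar>c\<bar> *\<^sub>R s) = 0"
      using tc deriv_0 popG_deriv_uminus_self[of s t] by (cases "c \<ge> 0") auto
    ultimately show False
      using popG_deriv_radial_pos[OF s, of "\<bar>c\<bar>"] popG_deriv_radial_neg[OF s, of "\<bar>c\<bar>"]
      by (cases "\<bar>c\<bar> < 1") auto
  qed
qed

lemma not_local_max_at_popG_0:
  fixes s :: "'a::euclidean_space"
  assumes s: "s \<noteq> 0"
  shows "\<not> local_max_at (popG s) 0"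
proof
  assume "local_max_at (popG s) 0"
  then obtain d where d: "d > 0" and max: "\<And>y. y \<noteq> 0 \<Longrightarrow> dist y 0 < d \<Longrightarrow> popG s y \<le> popG s 0"
    unfolding local_max_at_def eventually_at by auto
  define k where "k = min 1 (d / (2 * norm s))"
  have k: "0 < k" "k \<le> 1"
    unfolding k_def using d s by auto
  have "norm (k *\<^sub>R s) = k * norm s"
    using k by simp
  also have "\<dots> \<le> d / (2 * norm s) * norm s"
    unfolding k_def by (intro mult_right_mono) auto
  also have "\<dots> = d / 2"
    using s by simp
  finally have "popG s (k *\<^sub>R s) \<le> popG s 0"
    using d k s by (intro max) auto
  then show False
    using popG_lt_popG_scaleR[OF s k] by simp
qed

lemma not_local_min_at_popG_0:
  fixes s :: "'a::euclidean_space"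
  assumes "DIM('a) > 1"
  shows "\<not> local_min_at (popG s) 0"
proof
  obtain u where u: "u \<noteq> 0" "u \<bullet> s = 0"
    using orthogonal_to_vector_exists[of s] assms by (auto simp: orthogonal_def inner_commute)
  assume "local_min_at (popG s) 0"
  then obtain d where d: "d > 0" and min: "\<And>y. y \<noteq> 0 \<Longrightarrow> dist y 0 < d \<Longrightarrow> popG s 0 \<le> popG s y"
    unfolding local_min_at_def eventually_at by auto
  define k where "k = d / (2 * norm u)"
  have k: "k > 0" "norm (k *\<^sub>R u) = d / 2"
    unfolding k_def using d u by auto
  then have "popG s 0 \<le> popG s (k *\<^sub>R u)"
    using d u by (intro min) auto
  moreover obtain z where "0 < z"
    and eq: "popG s (k *\<^sub>R u) - popG s 0 = k * popG_deriv s (z *\<^sub>R u) u"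
    using popG_ray_mean_value[OF k(1)] by blast
  then have "popG_deriv s (z *\<^sub>R u) u < 0"
    using u by (intro popG_deriv_orthogonal_neg) auto
  then have "popG s (k *\<^sub>R u) - popG s 0 < 0"
    unfolding eq using k(1) by (rule mult_pos_neg[rotated])
  ultimately show False
    by simp
qed

lemma exists_scaleR_eq_if_DIM_1:
  fixes s y :: "'a::euclidean_space"
  assumes "DIM('a) = 1" "s \<noteq> 0"
  obtains c where "y = c *\<^sub>R s"
proof -
  have "span {s} = UNIV"
    using assms dim_eq_full[of "{s}"] by simp
  then show ?thesis
    using that span_singleton[of s] by auto
qed

lemma local_min_at_popG_0:
  fixes s :: "'a::euclidean_space"
  assumes "DIM('a) = 1" and s: "s \<noteq> 0"
  shows "local_min_at (popG s) 0"
  unfolding local_min_at_def eventually_at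
proof (intro exI[of _ "norm s"] conjI ballI impI)
  fix y :: 'a
  assume y: "y \<noteq> 0 \<and> dist y 0 < norm s"
  obtain c where yc: "y = c *\<^sub>R s"
    using exists_scaleR_eq_if_DIM_1[OF assms] .
  have "c \<noteq> 0" "\<bar>c\<bar> < 1"
    using y s unfolding yc by auto
  then have "popG s 0 < popG s (\<bar>c\<bar> *\<^sub>R s)"
    by (intro popG_lt_popG_scaleR[OF s]) auto
  moreover have "popG s y = popG s (\<bar>c\<bar> *\<^sub>R s)"
    unfolding yc by (cases "c \<ge> 0") (auto simp: popG_uminus)
  ultimately show "popG s 0 \<le> popG s y"
    by simp
qed (use s in simp)

theorem corollary3:
  fixes tstar :: "'a::euclidean_space"
  assumes "tstar \<noteq> 0"
  shows "{t. stationary_point (popG tstar) t} = {0, tstar, - tstar} \<and>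
    (DIM('a) = 1 \<longrightarrow> local_min_at (popG tstar) 0 \<and>
           global_max_at (popG tstar) tstar \<and> global_max_at (popG tstar) (- tstar)) \<and>
    (DIM('a) > 1 \<longrightarrow> saddle_point (popG tstar) 0 \<and>
           global_max_at (popG tstar) tstar \<and> global_max_at (popG tstar) (- tstar))"
proof (intro conjI impI)
  show "{t. stationary_point (popG tstar) t} = {0, tstar, - tstar}"
    using stationary_point_popG_cases[OF assms] stationary_point_popG_0
      stationary_point_popG_self stationary_point_popG_uminus_self by blast
  show "local_min_at (popG tstar) 0" if "DIM('a) = 1"
    using local_min_at_popG_0[OF that assms] .
  show "saddle_point (popG tstar) 0" if "DIM('a) > 1"
    unfolding saddle_point_def
    using stationary_point_popG_0 not_local_min_at_popG_0[OF that] not_local_max_at_popG_0[OF assms] by blast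
qed (rule global_max_at_popG_self global_max_at_popG_uminus_self)+

end
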